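(* Let $\mathcal{T}_2$ be a connected full subgraph of $\mathcal{T}$ with vertex set $\mathcal{V}_2$ and boundary $\mathcal{B}=\{u\in\mathcal{V}_2:\exists w\notin\mathcal{V}_2\text{ adjacent to }u\}$. (a) Every element of the support of the reduced series $Z(\mathbf{t}_{\mathcal{V}_2})$ can be written in a unique way as $\sum_{v\in\mathcal{V}_2}r_vE_v^*|_{\mathcal{V}_2}$ with $r_v\in\mathbb{Q}_{\ge0}$. (b) Fix $u\in\mathcal{B}$ and let $\delta_{2,u}$ be the number of edges of $\mathcal{T}_2$ adjacent to $u$. If $\delta_{2,u}\ge2$ and $\sum_{v\in\mathcal{V}_2}r_vE_v^*|_{\mathcal{V}_2}$ is in the support of $Z(\mathbf{t}_{\mathcal{V}_2})$, then $$r_u\cdot E_u^*|_u\le\sum_{v\in\mathcal{V}_{1,u}}(\delta_v-2)\,E_v^*|_u,$$ where $\mathcal{V}_{1,u}$ is the vertex set of the full connected subgraph $\mathcal{T}_{1,u}$ of $\mathcal{T}$ consisting of $u$ together with all connected components of $\mathcal{T}\setminus\mathcal{T}_2$ having a vertex adjacent to $u$.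
   Context: $\mathcal{T}$ is a connected plumbing graph which is a tree with genus-$0$ vertices $\mathcal{V}$, valencies $\delta_v$ (in $\mathcal{T}$), negative definite intersection form on $L=\mathbb{Z}\langle E_v\rangle$; $E_v^*\in L\otimes\mathbb{Q}$ is defined by $(E_v^*,E_w)=-\delta_{vw}$. For $x=\sum_w x_wE_w$, $x|_u=x_u$ is its $E_u$-coefficient and $x|_{\mathcal{V}_2}=\sum_{w\in\mathcal{V}_2}x_wE_w$. $Z(\mathbf{t})$ is the Taylor expansion at the origin of $\prod_{v}(1-\mathbf{t}^{E_v^*})^{\delta_v-2}$ with $\mathbf{t}^{l'}=\prod t_v^{l'_v}$, and $Z(\mathbf{t}_{\mathcal{V}_2})$ is obtained by substituting $t_v=1$ for all $v\notin\mathcal{V}_2$; its support is the set of exponents (vectors $l'|_{\mathcal{V}_2}$) with nonzero coefficient. *)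

theory Defs
  imports Complex_Main
begin

text \<open>A plumbing graph: finite vertex set V, adjacency relation Adj, Euler numbers e.
  All vertices have genus 0.  Vectors of L (x) Q are functions 'v => rat,
  the coefficient of E_w being x w (and x w = 0 for w outside V).\<close>

definition edges_of :: "('v \<Rightarrow> 'v \<Rightarrow> bool) \<Rightarrow> 'v set set" where
  "edges_of Adj = {{a, b} | a b. Adj a b}"

definition connected_in :: "'v set \<Rightarrow> ('v \<Rightarrow> 'v \<Rightarrow> bool) \<Rightarrow> 'v \<Rightarrow> 'v \<Rightarrow> bool" where
  "connected_in S Adj = (\<lambda>a b. a \<in> S \<and> b \<in> S \<and> Adj a b)\<^sup>*\<^sup>*"

definition is_connected :: "'v set \<Rightarrow> ('v \<Rightarrow> 'v \<Rightarrow> bool) \<Rightarrow> bool" where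
  "is_connected S Adj \<longleftrightarrow> S \<noteq> {} \<and> (\<forall>a\<in>S. \<forall>b\<in>S. connected_in S Adj a b)"

definition is_tree :: "'v set \<Rightarrow> ('v \<Rightarrow> 'v \<Rightarrow> bool) \<Rightarrow> bool" where
  "is_tree V Adj \<longleftrightarrow> finite V \<and> (\<forall>a b. Adj a b \<longrightarrow> a \<in> V \<and> b \<in> V)
     \<and> (\<forall>a b. Adj a b \<longrightarrow> Adj b a) \<and> (\<forall>a. \<not> Adj a a)
     \<and> is_connected V Adj \<and> card (edges_of Adj) = card V - 1"

definition valency :: "'v set \<Rightarrow> ('v \<Rightarrow> 'v \<Rightarrow> bool) \<Rightarrow> 'v \<Rightarrow> nat" where
  "valency V Adj v = card {w \<in> V. Adj v w}"

definition inter :: "('v \<Rightarrow> 'v \<Rightarrow> bool) \<Rightarrow> ('v \<Rightarrow> int) \<Rightarrow> 'v \<Rightarrow> 'v \<Rightarrow> rat" where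
  "inter Adj e a b = (if a = b then of_int (e a) else if Adj a b then 1 else 0)"

definition pair_E :: "'v set \<Rightarrow> ('v \<Rightarrow> 'v \<Rightarrow> bool) \<Rightarrow> ('v \<Rightarrow> int) \<Rightarrow> ('v \<Rightarrow> rat) \<Rightarrow> 'v \<Rightarrow> rat" where
  "pair_E V Adj e x w = (\<Sum>a\<in>V. x a * inter Adj e a w)"

definition form :: "'v set \<Rightarrow> ('v \<Rightarrow> 'v \<Rightarrow> bool) \<Rightarrow> ('v \<Rightarrow> int) \<Rightarrow> ('v \<Rightarrow> rat) \<Rightarrow> ('v \<Rightarrow> rat) \<Rightarrow> rat" where
  "form V Adj e x y = (\<Sum>a\<in>V. \<Sum>b\<in>V. x a * y b * inter Adj e a b)"

definition neg_definite :: "'v set \<Rightarrow> ('v \<Rightarrow> 'v \<Rightarrow> bool) \<Rightarrow> ('v \<Rightarrow> int) \<Rightarrow> bool" where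
  "neg_definite V Adj e \<longleftrightarrow> (\<forall>x. (\<exists>v\<in>V. x v \<noteq> 0) \<longrightarrow> form V Adj e x x < 0)"

definition Edual :: "'v set \<Rightarrow> ('v \<Rightarrow> 'v \<Rightarrow> bool) \<Rightarrow> ('v \<Rightarrow> int) \<Rightarrow> 'v \<Rightarrow> ('v \<Rightarrow> rat)" where
  "Edual V Adj e v = (THE x. (\<forall>w\<in>V. pair_E V Adj e x w = (if w = v then -1 else 0))
                           \<and> (\<forall>w. w \<notin> V \<longrightarrow> x w = 0))"

definition restr :: "'v set \<Rightarrow> ('v \<Rightarrow> rat) \<Rightarrow> ('v \<Rightarrow> rat)" where
  "restr S x = (\<lambda>w. if w \<in> S then x w else 0)"

text \<open>Expanding (1 - X)^(delta_v - 2) = sum_k (-1)^k ((delta_v-2) gchoose k) X^k for each factor,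
  the coefficient of t^{l'} in Z(t) is the sum over all k : V -> N with sum_v k_v E_v^* = l'
  of the products of these coefficients.  Substituting t_v = 1 for v not in V2, the coefficient of
  the reduced series Z(t_{V2}) at an exponent m (a vector supported on V2) is the sum over all k
  with (sum_v k_v E_v^*)|_{V2} = m.  (The index set is finite, since the E_v^* have positive entries.)\<close>
definition exps :: "'v set \<Rightarrow> ('v \<Rightarrow> 'v \<Rightarrow> bool) \<Rightarrow> ('v \<Rightarrow> int) \<Rightarrow> 'v set \<Rightarrow> ('v \<Rightarrow> rat) \<Rightarrow> ('v \<Rightarrow> nat) set" where
  "exps V Adj e V2 m = {k. (\<forall>w. w \<notin> V \<longrightarrow> k w = 0) \<and>
      restr V2 (\<lambda>w. \<Sum>v\<in>V. of_nat (k v) * Edual V Adj e v w) = m}"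

definition Zcoeff_factor :: "'v set \<Rightarrow> ('v \<Rightarrow> 'v \<Rightarrow> bool) \<Rightarrow> ('v \<Rightarrow> nat) \<Rightarrow> rat" where
  "Zcoeff_factor V Adj k = (\<Prod>v\<in>V. (-1) ^ k v * ((of_int (int (valency V Adj v) - 2)) gchoose (k v)))"

definition Zred_coeff :: "'v set \<Rightarrow> ('v \<Rightarrow> 'v \<Rightarrow> bool) \<Rightarrow> ('v \<Rightarrow> int) \<Rightarrow> 'v set \<Rightarrow> ('v \<Rightarrow> rat) \<Rightarrow> rat" where
  "Zred_coeff V Adj e V2 m = (\<Sum>k\<in>exps V Adj e V2 m. Zcoeff_factor V Adj k)"

definition Zred_support :: "'v set \<Rightarrow> ('v \<Rightarrow> 'v \<Rightarrow> bool) \<Rightarrow> ('v \<Rightarrow> int) \<Rightarrow> 'v set \<Rightarrow> ('v \<Rightarrow> rat) set" where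
  "Zred_support V Adj e V2 = {m. Zred_coeff V Adj e V2 m \<noteq> 0}"

definition dual_comb :: "'v set \<Rightarrow> ('v \<Rightarrow> 'v \<Rightarrow> bool) \<Rightarrow> ('v \<Rightarrow> int) \<Rightarrow> 'v set \<Rightarrow> ('v \<Rightarrow> rat) \<Rightarrow> ('v \<Rightarrow> rat)" where
  "dual_comb V Adj e V2 r = restr V2 (\<lambda>w. \<Sum>v\<in>V2. r v * Edual V Adj e v w)"

definition boundary :: "'v set \<Rightarrow> ('v \<Rightarrow> 'v \<Rightarrow> bool) \<Rightarrow> 'v set \<Rightarrow> 'v set" where
  "boundary V Adj V2 = {u \<in> V2. \<exists>w\<in>V - V2. Adj u w}"

definition V1 :: "'v set \<Rightarrow> ('v \<Rightarrow> 'v \<Rightarrow> bool) \<Rightarrow> 'v set \<Rightarrow> 'v \<Rightarrow> 'v set" where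
  "V1 V Adj V2 u = insert u {w. \<exists>x\<in>V - V2. Adj u x \<and> connected_in (V - V2) Adj x w}"

end

theory Submission
  imports Defs "HOL-Computational_Algebra.Computational_Algebra" "Jordan_Normal_Form.Determinant"
begin

text \<open>
  Every \<open>E_v^*|_{V2}\<close> is a nonnegative combination of the \<open>E_w^*|_{V2}\<close>, \<open>w \<in> V2\<close>,
  which are linearly independent by negative definiteness; this gives (a).
  For (b), a component of \<open>T \ T2\<close> attaches to \<open>T2\<close> at a single vertex, so the vertices of
  \<open>V1u\<close> contribute to the coordinate \<open>r_u\<close> only and the coefficient of \<open>Z(t_{V2})\<close> factors.
  After scaling \<open>E_u^*\<close> to an integral vector \<open>g\<close>, the \<open>V1u\<close>-factor is a coefficient of
  \<open>\<Prod>v\<in>V1u. (1 - t^(g v))^(\<delta>_v - 2)\<close>. Since \<open>g\<close> is harmonic away from \<open>u\<close>, every root of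
  unity is a root of the numerator at least as often as of the denominator, so this is a polynomial of
  degree \<open>\<Sum>v\<in>V1u. (\<delta>_v - 2) g_v\<close>, and its coefficients beyond the degree vanish.
\<close>

section \<open>The power series \<open>(1 - X^g)^n\<close>\<close>

definition alt_gbinomial :: "int \<Rightarrow> nat \<Rightarrow> complex" where
  "alt_gbinomial n t = (-1) ^ t * (of_int n gchoose t)"

definition one_minus_Xpow_fps :: "nat \<Rightarrow> int \<Rightarrow> complex fps" where
  "one_minus_Xpow_fps g n = Abs_fps (\<lambda>j. if g dvd j then alt_gbinomial n (j div g) else 0)"

lemma one_minus_Xpow_fps_nth:
  "one_minus_Xpow_fps g n $ j = (if g dvd j then alt_gbinomial n (j div g) else 0)"
  by (simp add: one_minus_Xpow_fps_def)

lemma sum_atLeastAtMost_multiples: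
  fixes f :: "nat \<Rightarrow> 'a::comm_monoid_add"
  assumes g: "g > 0" and f: "\<And>i. \<not> g dvd i \<Longrightarrow> f i = 0"
  shows "(\<Sum>i=0..Q. f i) = (\<Sum>t=0..Q div g. f (g*t))"
proof -
  have mult_le: "g * t \<le> Q \<longleftrightarrow> t \<le> Q div g" for t
    using g by (simp add: less_eq_div_iff_mult_less_eq mult.commute)
  have "(\<Sum>i=0..Q. f i) = (\<Sum>i\<in>(\<lambda>t. g*t) ` {0..Q div g}. f i)"
  proof (rule sum.mono_neutral_right)
    show "\<forall>i\<in>{0..Q} - (\<lambda>t. g * t) ` {0..Q div g}. f i = 0"
    proof
      fix i assume i: "i \<in> {0..Q} - (\<lambda>t. g * t) ` {0..Q div g}"
      show "f i = 0"
      proof (cases "g dvd i")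
        case True
        then obtain t where "i = g * t" by blast
        with i mult_le show ?thesis by auto
      qed (rule f)
    qed
  qed (use mult_le in auto)
  also have "\<dots> = (\<Sum>t=0..Q div g. f (g*t))"
    using g by (subst sum.reindex) (auto simp: inj_on_def)
  finally show ?thesis .
qed

lemma one_minus_Xpow_fps_add:
  assumes g: "g > 0"
  shows "one_minus_Xpow_fps g (a + b) = one_minus_Xpow_fps g a * one_minus_Xpow_fps g b"
proof (rule fps_ext)
  fix j
  let ?A = "one_minus_Xpow_fps g a" and ?B = "one_minus_Xpow_fps g b"
  show "one_minus_Xpow_fps g (a + b) $ j = (?A * ?B) $ j"
  proof (cases "g dvd j")
    case True
    then obtain m where j: "j = g * m" by auto
    have "(?A * ?B) $ j = (\<Sum>t=0..m. ?A $ (g*t) * ?B $ (g*m - g*t))"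
      using sum_atLeastAtMost_multiples[OF g, of "\<lambda>i. ?A $ i * ?B $ (g*m - i)" j]
      by (simp add: fps_mult_nth j one_minus_Xpow_fps_nth g)
    also have "\<dots> = (\<Sum>t=0..m. alt_gbinomial a t * alt_gbinomial b (m - t))"
    proof (rule sum.cong)
      fix t assume "t \<in> {0..m}"
      then have "g*m - g*t = g*(m-t)" by (simp add: diff_mult_distrib2)
      then show "?A $ (g*t) * ?B $ (g*m - g*t) = alt_gbinomial a t * alt_gbinomial b (m - t)"
        using g by (simp add: one_minus_Xpow_fps_nth)
    qed simp
    also have "\<dots> = (-1)^m * (\<Sum>t=0..m. (of_int a gchoose t) * (of_int b gchoose (m - t)))"
      unfolding sum_distrib_left
    proof (rule sum.cong)
      fix t assume "t \<in> {0..m}"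
      then have "(-1::complex)^t * (-1)^(m-t) = (-1)^m"
        by (simp add: power_add[symmetric])
      then show "alt_gbinomial a t * alt_gbinomial b (m - t)
          = (-1)^m * ((of_int a gchoose t) * (of_int b gchoose (m - t)))"
        unfolding alt_gbinomial_def by (metis (no_types, lifting) mult.assoc mult.left_commute)
    qed simp
    also have "\<dots> = alt_gbinomial (a+b) m"
      by (simp add: gbinomial_Vandermonde alt_gbinomial_def)
    finally show ?thesis using g by (simp add: one_minus_Xpow_fps_nth j)
  next
    case False
    have "?A $ i * ?B $ (j - i) = 0" if "i \<le> j" for i
    proof -
      have "\<not> (g dvd i \<and> g dvd (j - i))"
        using False that dvd_add[of g i "j - i"] by auto
      then show ?thesis by (auto simp: one_minus_Xpow_fps_nth)
    qed
    then have "(?A * ?B) $ j = 0"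
      unfolding fps_mult_nth by (intro sum.neutral) auto
    then show ?thesis using False by (simp add: one_minus_Xpow_fps_nth)
  qed
qed

lemma one_minus_Xpow_fps_0: "g > 0 \<Longrightarrow> one_minus_Xpow_fps g 0 = 1"
  by (rule fps_ext) (auto simp: one_minus_Xpow_fps_nth alt_gbinomial_def gbinomial_0_left elim!: dvdE)

lemma alt_gbinomial_1: "alt_gbinomial 1 m = (if m = 0 then 1 else if m = 1 then -1 else 0)"
proof -
  have "alt_gbinomial 1 m = (-1) ^ m * of_nat (1 choose m)"
    using binomial_gbinomial[of 1 m, where 'a=complex] by (simp add: alt_gbinomial_def)
  then show ?thesis by (auto simp: binomial_eq_0)
qed

lemma one_minus_Xpow_fps_1: "g > 0 \<Longrightarrow> one_minus_Xpow_fps g 1 = fps_of_poly (1 - monom 1 g)"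
  by (rule fps_ext) (auto simp: one_minus_Xpow_fps_nth alt_gbinomial_1 coeff_monom elim!: dvdE)

lemma one_minus_Xpow_fps_of_nat:
  "g > 0 \<Longrightarrow> one_minus_Xpow_fps g (int k) = fps_of_poly ((1 - monom 1 g) ^ k)"
proof (induction k)
  case 0 then show ?case by (simp add: one_minus_Xpow_fps_0)
next
  case (Suc k)
  have "one_minus_Xpow_fps g (int (Suc k)) = one_minus_Xpow_fps g (int k) * one_minus_Xpow_fps g 1"
    using one_minus_Xpow_fps_add[OF Suc.prems, of "int k" 1] by (simp add: add.commute)
  then show ?case
    using Suc by (simp add: one_minus_Xpow_fps_1 fps_of_poly_mult fps_of_poly_power mult.commute)
qed

lemma one_minus_Xpow_fps_uminus_inverse:
  "g > 0 \<Longrightarrow> one_minus_Xpow_fps g (- int k) * fps_of_poly ((1 - monom 1 g) ^ k) = 1"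
  using one_minus_Xpow_fps_add[of g "- int k" "int k"]
  by (simp add: one_minus_Xpow_fps_of_nat one_minus_Xpow_fps_0)

definition weighted_compositions :: "'i set \<Rightarrow> ('i \<Rightarrow> nat) \<Rightarrow> nat \<Rightarrow> ('i \<Rightarrow> nat) set" where
  "weighted_compositions I g Q = {\<kappa>. (\<forall>i. i \<notin> I \<longrightarrow> \<kappa> i = 0) \<and> (\<Sum>i\<in>I. \<kappa> i * g i) = Q}"

lemma finite_weighted_compositions:
  assumes I: "finite I" and g: "\<forall>i\<in>I. g i > 0"
  shows "finite (weighted_compositions I g Q)"
proof (rule finite_subset)
  show "weighted_compositions I g Q
      \<subseteq> {f. \<forall>x. (x \<in> I \<longrightarrow> f x \<in> {0..Q}) \<and> (x \<notin> I \<longrightarrow> f x = 0)}"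
  proof safe
    fix \<kappa> x assume k: "\<kappa> \<in> weighted_compositions I g Q" and x: "x \<in> I"
    have "g x \<ge> 1" using g x by auto
    then have "\<kappa> x \<le> \<kappa> x * g x" by simp
    also have "\<dots> \<le> (\<Sum>i\<in>I. \<kappa> i * g i)" using I x by (intro member_le_sum) auto
    finally show "\<kappa> x \<in> {0..Q}" using k by (simp add: weighted_compositions_def)
  qed (auto simp: weighted_compositions_def)
qed (intro finite_set_of_finite_funs I finite_atLeastAtMost)

lemma weighted_compositions_insert:
  assumes I: "finite I" "a \<notin> I" and ga: "g a > 0"
  shows "bij_betw (\<lambda>\<kappa>. (\<kappa> a, \<kappa>(a := 0))) (weighted_compositions (insert a I) g Q)
           (SIGMA t:{0..Q div g a}. weighted_compositions I g (Q - g a * t))"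
proof (rule bij_betw_byWitness[where f' = "\<lambda>(t, \<kappa>). \<kappa>(a := t)"])
  have mult_le: "g a * t \<le> Q \<longleftrightarrow> t \<le> Q div g a" for t
    using ga by (simp add: less_eq_div_iff_mult_less_eq mult.commute)
  have sum_upd_I: "(\<Sum>i\<in>I. (\<kappa>(a := t)) i * g i) = (\<Sum>i\<in>I. \<kappa> i * g i)" for \<kappa> t
    using I by (intro sum.cong) auto
  have sum_upd: "(\<Sum>i\<in>insert a I. (\<kappa>(a := t)) i * g i) = t * g a + (\<Sum>i\<in>I. \<kappa> i * g i)" for \<kappa> t
    using I sum_upd_I by (simp add: sum.insert)
  show "(\<lambda>\<kappa>. (\<kappa> a, \<kappa>(a := 0))) ` weighted_compositions (insert a I) g Q
      \<subseteq> (SIGMA t:{0..Q div g a}. weighted_compositions I g (Q - g a * t))"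
  proof safe
    fix \<kappa> assume k: "\<kappa> \<in> weighted_compositions (insert a I) g Q"
    then have "\<kappa> a * g a + (\<Sum>i\<in>I. (\<kappa>(a := 0)) i * g i) = Q"
      using sum_upd[of \<kappa> "\<kappa> a"] sum_upd_I[of \<kappa> 0]
      by (simp add: weighted_compositions_def)
    with k show "\<kappa> a \<in> {0..Q div g a}" "\<kappa>(a := 0) \<in> weighted_compositions I g (Q - g a * \<kappa> a)"
      using mult_le[of "\<kappa> a"] by (auto simp: weighted_compositions_def mult.commute)
  qed
  show "(\<lambda>(t, \<kappa>). \<kappa>(a := t)) ` (SIGMA t:{0..Q div g a}. weighted_compositions I g (Q - g a * t))
      \<subseteq> weighted_compositions (insert a I) g Q"
  proof safe
    fix t \<kappa> assume t: "t \<in> {0..Q div g a}" and k: "\<kappa> \<in> weighted_compositions I g (Q - g a * t)"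
    then have "\<kappa> a = 0" using I by (auto simp: weighted_compositions_def)
    then have "(\<Sum>i\<in>insert a I. (\<kappa>(a := t)) i * g i) = Q"
      using sum_upd[of \<kappa> t] k t mult_le[of t] by (simp add: weighted_compositions_def mult.commute)
    with k show "\<kappa>(a := t) \<in> weighted_compositions (insert a I) g Q"
      by (auto simp: weighted_compositions_def)
  qed
qed (use assms in \<open>auto simp: weighted_compositions_def fun_upd_idem\<close>)

lemma one_minus_Xpow_fps_prod_nth:
  assumes I: "finite I" and g: "\<forall>i\<in>I. g i > 0"
  shows "(\<Prod>i\<in>I. one_minus_Xpow_fps (g i) (n i)) $ Q
       = (\<Sum>\<kappa>\<in>weighted_compositions I g Q. \<Prod>i\<in>I. alt_gbinomial (n i) (\<kappa> i))"
  using I g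
proof (induction I arbitrary: Q rule: finite_induct)
  case empty
  have "weighted_compositions {} g Q = (if Q = 0 then {\<lambda>_. 0} else {})"
    by (auto simp: weighted_compositions_def)
  then show ?case by simp
next
  case (insert a I)
  have ga: "g a > 0" and gI: "\<forall>i\<in>I. g i > 0" using insert by auto
  let ?F = "\<Prod>i\<in>I. one_minus_Xpow_fps (g i) (n i)"
  let ?c = "\<lambda>I \<kappa>. \<Prod>i\<in>I. alt_gbinomial (n i) (\<kappa> i)"
  have "(one_minus_Xpow_fps (g a) (n a) * ?F) $ Q
      = (\<Sum>t=0..Q div g a. one_minus_Xpow_fps (g a) (n a) $ (g a * t) * ?F $ (Q - g a * t))"
    unfolding fps_mult_nth
    by (rule sum_atLeastAtMost_multiples[OF ga]) (simp add: one_minus_Xpow_fps_nth)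
  also have "\<dots> = (\<Sum>t=0..Q div g a. \<Sum>\<kappa>\<in>weighted_compositions I g (Q - g a * t).
                     alt_gbinomial (n a) t * ?c I \<kappa>)"
    using ga by (simp add: one_minus_Xpow_fps_nth insert.IH[OF gI] sum_distrib_left)
  also have "\<dots> = (\<Sum>(t,\<kappa>)\<in>(SIGMA t:{0..Q div g a}. weighted_compositions I g (Q - g a * t)).
                     alt_gbinomial (n a) t * ?c I \<kappa>)"
    by (rule sum.Sigma) (auto intro: finite_weighted_compositions[OF insert(1) gI])
  also have "\<dots> = (\<Sum>\<kappa>\<in>weighted_compositions (insert a I) g Q. alt_gbinomial (n a) (\<kappa> a) * ?c I (\<kappa>(a := 0)))"
    by (subst sum.reindex_bij_betw[symmetric, OF weighted_compositions_insert[of I a g Q, OF insert.hyps ga]]) simp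
  also have "\<dots> = (\<Sum>\<kappa>\<in>weighted_compositions (insert a I) g Q. ?c (insert a I) \<kappa>)"
    using insert by (intro sum.cong refl) (auto simp: prod.insert intro!: prod.cong)
  finally show ?case using insert by simp
qed

lemma complex_poly_dvd_if_order_le:
  fixes p q :: "complex poly"
  assumes "p \<noteq> 0" "q \<noteq> 0" "\<forall>a. order a p \<le> order a q"
  shows "p dvd q"
  using assms
proof (induction "degree p" arbitrary: p q rule: less_induct)
  case less
  show ?case
  proof (cases "degree p = 0")
    case True
    then have "is_unit p" using less.prems is_unit_iff_degree by blast
    then show ?thesis by (rule unit_imp_dvd)
  next
    case False
    then have "\<not> constant (poly p)" using constant_degree[of p] by simp
    then obtain a where a: "poly p a = 0"
      using fundamental_theorem_of_algebra by blast
    have "[:-a,1:] dvd p" using a dvd_iff_poly_eq_0[of "-a" p] by simp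
    then obtain p' where p': "p = [:-a,1:] * p'" by (auto elim: dvdE)
    have "order a p \<noteq> 0" using a less.prems order_root by blast
    then have "order a q \<noteq> 0" using less.prems(3) by (metis le_0_eq)
    then have "poly q a = 0" using order_root by blast
    then have "[:-a,1:] dvd q" using dvd_iff_poly_eq_0[of "-a" q] by simp
    then obtain q' where q': "q = [:-a,1:] * q'" by (auto elim: dvdE)
    have p0: "p' \<noteq> 0" using p' less.prems by auto
    have q0: "q' \<noteq> 0" using q' less.prems by auto
    have ord: "\<forall>b. order b p' \<le> order b q'"
    proof
      fix b
      have pm: "[:-a,1:] * p' \<noteq> 0" using p' less.prems(1) by metis
      have qm: "[:-a,1:] * q' \<noteq> 0" using q' less.prems(2) by metis
      have "order b p = order b [:-a,1:] + order b p'"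
        unfolding p' by (rule order_mult[OF pm])
      moreover have "order b q = order b [:-a,1:] + order b q'"
        unfolding q' by (rule order_mult[OF qm])
      ultimately show "order b p' \<le> order b q'" using less.prems(3) by (metis add_le_cancel_left)
    qed
    have "degree p = degree [:-a,1:] + degree p'"
      unfolding p' by (rule degree_mult_eq) (use p0 in auto)
    then have "degree p = Suc (degree p')" by simp
    then have "degree p' < degree p" by simp
    then have "p' dvd q'" using less.hyps p0 q0 ord by blast
    then have "[:-a,1:] * p' dvd [:-a,1:] * q'" by (rule mult_dvd_mono[OF dvd_refl])
    then show ?thesis using p' q' by metis
  qed
qed

lemma one_minus_monom_nonzero: "g > 0 \<Longrightarrow> (1 - monom 1 g :: 'a::comm_ring_1 poly) \<noteq> 0"
  by (auto simp: poly_eq_iff coeff_monom dest: spec[of _ 0])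

lemma degree_one_minus_monom: "g > 0 \<Longrightarrow> degree (1 - monom 1 g :: 'a::comm_ring_1 poly) = g"
proof (rule antisym)
  assume g: "g > 0"
  show "degree (1 - monom 1 g :: 'a poly) \<le> g"
    by (rule order.trans[OF degree_diff_le_max]) (auto intro: degree_monom_le)
  have "coeff (1 - monom 1 g :: 'a poly) g \<noteq> 0" using g by (simp add: coeff_monom)
  then show "g \<le> degree (1 - monom 1 g :: 'a poly)" by (rule le_degree)
qed

text \<open>The roots of \<open>1 - X^g\<close> are the \<open>g\<close>-th roots of unity, all simple since the derivative
  \<open>-g X^(g-1)\<close> does not vanish there.\<close>
lemma order_one_minus_monom:
  fixes a :: complex
  assumes g: "g > 0"
  shows "order a (1 - monom 1 g) = (if a ^ g = 1 then 1 else 0)"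
proof (cases "a ^ g = 1")
  case False
  then show ?thesis by (simp add: order_0I poly_monom)
next
  case True
  have a0: "a \<noteq> 0" using True g by (metis power_0_left less_not_refl2 zero_neq_one)
  have root: "poly (1 - monom 1 g) a = 0" using True by (simp add: poly_monom)
  have "poly (pderiv (1 - monom 1 g :: complex poly)) a = - of_nat g * a ^ (g - 1)"
    by (simp add: pderiv_diff pderiv_monom poly_monom)
  also have "\<dots> \<noteq> 0" using a0 g by simp
  finally have "order a (pderiv (1 - monom 1 g :: complex poly)) = 0" by (rule order_0I)
  then show ?thesis using order_pderiv[OF one_minus_monom_nonzero[OF g] root] True by simp
qed

lemma order_prod:
  fixes p :: "'i \<Rightarrow> 'a::idom poly"
  assumes "finite I" "\<forall>i\<in>I. p i \<noteq> 0"
  shows "order a (\<Prod>i\<in>I. p i) = (\<Sum>i\<in>I. order a (p i))"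
  using assms
proof (induction I rule: finite_induct)
  case (insert x I)
  then have "p x * (\<Prod>i\<in>I. p i) \<noteq> 0" by auto
  then show ?case using insert by (simp add: order_mult)
qed simp

lemma order_power:
  fixes p :: "'a::idom poly"
  assumes "p \<noteq> 0"
  shows "order a (p ^ k) = k * order a p"
  using assms by (induction k) (simp_all add: order_mult)

lemma order_prod_one_minus_monom_power:
  fixes a :: complex
  assumes J: "finite J" and g: "\<forall>i\<in>J. g i > 0"
  shows "order a (\<Prod>i\<in>J. (1 - monom 1 (g i)) ^ k i) = (\<Sum>i\<in>{i\<in>J. a ^ g i = 1}. k i)"
proof -
  have nz: "(1 - monom 1 (g i) :: complex poly) \<noteq> 0" if "i \<in> J" for i
    using g that one_minus_monom_nonzero by blast
  have "order a (\<Prod>i\<in>J. (1 - monom 1 (g i)) ^ k i) = (\<Sum>i\<in>J. order a ((1 - monom 1 (g i)) ^ k i))"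
    using J nz by (intro order_prod ballI power_not_zero) auto
  also have "\<dots> = (\<Sum>i\<in>J. if a ^ g i = 1 then k i else 0)"
    using g nz by (intro sum.cong refl) (simp add: order_power order_one_minus_monom)
  finally show ?thesis using J by (simp add: sum.inter_filter)
qed

lemma degree_prod_one_minus_monom_power:
  assumes g: "\<forall>i\<in>J. g i > 0"
  shows "degree (\<Prod>i\<in>J. (1 - monom 1 (g i) :: 'a::idom poly) ^ k i) = (\<Sum>i\<in>J. k i * g i)"
proof -
  have nz: "(1 - monom 1 (g i) :: 'a poly) \<noteq> 0" if "i \<in> J" for i
    using g that one_minus_monom_nonzero by blast
  have "degree (\<Prod>i\<in>J. (1 - monom 1 (g i) :: 'a poly) ^ k i) = (\<Sum>i\<in>J. degree ((1 - monom 1 (g i) :: 'a poly) ^ k i))"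
    using nz by (intro degree_prod_sum_eq power_not_zero)
  also have "\<dots> = (\<Sum>i\<in>J. k i * g i)"
    using g nz by (intro sum.cong refl) (simp add: degree_power_eq degree_one_minus_monom)
  finally show ?thesis .
qed

text \<open>The positive-exponent factors form a polynomial \<open>num\<close>, the negative ones the inverse of a
  polynomial \<open>den\<close>; the hypothesis says that every root of \<open>den\<close> is a root of \<open>num\<close> of at least
  the same multiplicity, so the product is the polynomial \<open>num / den\<close>.\<close>
lemma prod_one_minus_Xpow_fps_polynomial:
  fixes n :: "'i \<Rightarrow> int"
  assumes I: "finite I" and g: "\<forall>i\<in>I. g i > 0"
    and roots: "\<forall>\<zeta>::complex. 0 \<le> (\<Sum>i\<in>{i\<in>I. \<zeta> ^ g i = 1}. n i)"
  obtains P where "(\<Prod>i\<in>I. one_minus_Xpow_fps (g i) (n i)) = fps_of_poly P"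
    and "int (degree P) = (\<Sum>i\<in>I. n i * int (g i))"
proof -
  define Ip where "Ip = {i\<in>I. 0 \<le> n i}"
  define In where "In = {i\<in>I. n i < 0}"
  define num :: "complex poly" where "num = (\<Prod>i\<in>Ip. (1 - monom 1 (g i)) ^ nat (n i))"
  define den :: "complex poly" where "den = (\<Prod>i\<in>In. (1 - monom 1 (g i)) ^ nat (- n i))"
  have fin: "finite Ip" "finite In" using I by (auto simp: Ip_def In_def)
  have gpos: "\<forall>i\<in>Ip. g i > 0" "\<forall>i\<in>In. g i > 0" using g by (auto simp: Ip_def In_def)
  have split: "Ip \<inter> In = {}" "I = Ip \<union> In" by (auto simp: Ip_def In_def)
  have sum_split: "(\<Sum>i\<in>I. f i) = (\<Sum>i\<in>Ip. f i) + (\<Sum>i\<in>In. f i)" for f :: "'i \<Rightarrow> int"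
    using fin split by (simp add: sum.union_disjoint)
  have nz: "num \<noteq> 0" "den \<noteq> 0"
    using fin gpos one_minus_monom_nonzero by (auto simp: num_def den_def)
  have "order a den \<le> order a num" for a
  proof -
    let ?r = "\<lambda>J. \<Sum>i\<in>{i\<in>J. a ^ g i = 1}. n i"
    have r: "?r J = (\<Sum>i\<in>J. if a ^ g i = 1 then n i else 0)" if "finite J" for J
      using that by (simp add: sum.inter_filter)
    have "int (order a num) = ?r Ip"
      using fin gpos by (simp add: num_def order_prod_one_minus_monom_power Ip_def)
    moreover have "int (order a den) = - ?r In"
      using fin gpos by (simp add: den_def order_prod_one_minus_monom_power In_def sum_negf)
    moreover have "?r I = ?r Ip + ?r In" using fin I by (simp add: r sum_split)
    ultimately have "int (order a num) - int (order a den) = ?r I" by simp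
    then show ?thesis using roots[rule_format, of a] by linarith
  qed
  then have "den dvd num" using complex_poly_dvd_if_order_le nz by blast
  then obtain P where P: "num = den * P" by (auto elim: dvdE)
  have "int (degree P) = int (degree num) - int (degree den)"
    using P nz by (simp add: degree_mult_eq)
  also have "\<dots> = (\<Sum>i\<in>Ip. n i * int (g i)) + (\<Sum>i\<in>In. n i * int (g i))"
  proof -
    have "int (degree num) = (\<Sum>i\<in>Ip. n i * int (g i))"
      unfolding num_def degree_prod_one_minus_monom_power[OF gpos(1)] of_nat_sum
      by (intro sum.cong refl) (simp add: Ip_def)
    moreover have "int (degree den) = - (\<Sum>i\<in>In. n i * int (g i))"
      unfolding den_def degree_prod_one_minus_monom_power[OF gpos(2)] of_nat_sum sum_negf[symmetric]
      by (intro sum.cong refl) (simp add: In_def)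
    ultimately show ?thesis by simp
  qed
  also have "\<dots> = (\<Sum>i\<in>I. n i * int (g i))" by (simp add: sum_split)
  finally have degree: "int (degree P) = (\<Sum>i\<in>I. n i * int (g i))" .
  have num_fps: "(\<Prod>i\<in>Ip. one_minus_Xpow_fps (g i) (n i)) = fps_of_poly num"
  proof -
    have "one_minus_Xpow_fps (g i) (n i) = fps_of_poly ((1 - monom 1 (g i)) ^ nat (n i))" if "i \<in> Ip" for i
      using one_minus_Xpow_fps_of_nat[of "g i" "nat (n i)"] gpos that by (simp add: Ip_def)
    then show ?thesis unfolding num_def fps_of_poly_prod by (rule prod.cong[OF refl])
  qed
  have den_fps: "(\<Prod>i\<in>In. one_minus_Xpow_fps (g i) (n i)) * fps_of_poly den = 1"
  proof -
    have "one_minus_Xpow_fps (g i) (n i) * fps_of_poly ((1 - monom 1 (g i)) ^ nat (- n i)) = 1"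
      if "i \<in> In" for i
      using one_minus_Xpow_fps_uminus_inverse[of "g i" "nat (- n i)"] gpos that by (simp add: In_def)
    then show ?thesis
      unfolding den_def fps_of_poly_prod prod.distrib[symmetric] by (rule prod.neutral[OF ballI])
  qed
  have "(\<Prod>i\<in>I. one_minus_Xpow_fps (g i) (n i))
      = fps_of_poly P * (fps_of_poly den * (\<Prod>i\<in>In. one_minus_Xpow_fps (g i) (n i)))"
    using fin split num_fps P by (simp add: prod.union_disjoint fps_of_poly_mult mult_ac)
  also have "\<dots> = fps_of_poly P" using den_fps by (simp add: mult.commute)
  finally show ?thesis using that degree by blast
qed

lemma sum_weighted_compositions_alt_gbinomial_eq_0:
  fixes n :: "'i \<Rightarrow> int"
  assumes I: "finite I" and g: "\<forall>i\<in>I. g i > 0"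
    and roots: "\<forall>\<zeta>::complex. 0 \<le> (\<Sum>i\<in>{i\<in>I. \<zeta> ^ g i = 1}. n i)"
    and Q: "int Q > (\<Sum>i\<in>I. n i * int (g i))"
  shows "(\<Sum>\<kappa>\<in>weighted_compositions I g Q. \<Prod>i\<in>I. alt_gbinomial (n i) (\<kappa> i)) = 0"
proof -
  obtain P where P: "(\<Prod>i\<in>I. one_minus_Xpow_fps (g i) (n i)) = fps_of_poly P"
    and degree: "int (degree P) = (\<Sum>i\<in>I. n i * int (g i))"
    using prod_one_minus_Xpow_fps_polynomial[OF I g roots] .
  have "coeff P Q = 0" using degree Q by (intro coeff_eq_0) linarith
  then show ?thesis using one_minus_Xpow_fps_prod_nth[OF I g, of n Q] P by simp
qed

lemma of_rat_gchoose: "(of_rat (a gchoose k) :: complex) = (of_rat a) gchoose k"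
proof -
  have f: "(of_rat (fact k) :: complex) = fact k" by (metis of_nat_fact of_rat_of_nat_eq)
  show ?thesis by (simp add: gbinomial_prod_rev of_rat_prod of_rat_divide of_rat_diff f)
qed

lemma rat_common_denominator:
  fixes f :: "'a \<Rightarrow> rat"
  assumes "finite S"
  shows "\<exists>N::nat. N > 0 \<and> (\<forall>v\<in>S. \<exists>z::int. of_nat N * f v = of_int z)"
  using assms
proof (induction S rule: finite_induct)
  case empty then show ?case by (intro exI[of _ 1]) auto
next
  case (insert a S)
  obtain N where N: "N > 0" "\<forall>v\<in>S. \<exists>z::int. of_nat N * f v = of_int z" using insert by blast
  obtain p q where pq: "quotient_of (f a) = (p, q)" by (cases "quotient_of (f a)")
  have q: "q > 0" using pq quotient_of_denom_pos by blast
  have fa: "f a = of_int p / of_int q" using pq quotient_of_div by blast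
  define M where "M = N * nat q"
  have "M > 0" using N q by (simp add: M_def)
  moreover have "\<forall>v\<in>insert a S. \<exists>z::int. of_nat M * f v = of_int z"
  proof
    fix v assume v: "v \<in> insert a S"
    show "\<exists>z::int. of_nat M * f v = of_int z"
    proof (cases "v = a")
      case True
      have "of_nat M * f v = of_int (int N * p)"
        using True q fa by (simp add: M_def of_nat_mult)
      then show ?thesis by blast
    next
      case False
      then obtain z where z: "of_nat N * f v = of_int z" using N v by auto
      have "of_nat M * f v = of_int (q * z)"
        using q z by (simp add: M_def of_nat_mult mult_ac flip: z)
      then show ?thesis by blast
    qed
  qed
  ultimately show ?case by blast
qed

lemma positive_rat_common_denominator:
  fixes f :: "'a \<Rightarrow> rat"
  assumes S: "finite S" and pos: "\<forall>v\<in>S. f v > 0"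
  obtains N :: nat and g :: "'a \<Rightarrow> nat" where "N > 0" "\<forall>v\<in>S. of_nat (g v) = of_nat N * f v \<and> g v > 0"
proof -
  obtain N :: nat where N: "N > 0" "\<forall>v\<in>S. \<exists>z::int. of_nat N * f v = of_int z"
    using rat_common_denominator[OF S] by blast
  define g where "g v = nat \<lfloor>of_nat N * f v\<rfloor>" for v
  have "of_nat (g v) = of_nat N * f v \<and> g v > 0" if v: "v \<in> S" for v
  proof -
    obtain z :: int where z: "of_nat N * f v = of_int z" using N v by blast
    have "(of_int z :: rat) > 0" unfolding z[symmetric] using N pos v by simp
    then have "z > 0" by simp
    moreover have "g v = nat z" by (simp add: g_def z)
    ultimately show ?thesis using z by simp
  qed
  then show ?thesis using that[OF N(1)] by blast
qed

lemma mat_mult_vec_solvable: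
  fixes A :: "'a::field mat"
  assumes A: "A \<in> carrier_mat n n" and ker: "\<And>y. y \<in> carrier_vec n \<Longrightarrow> A *\<^sub>v y = 0\<^sub>v n \<Longrightarrow> y = 0\<^sub>v n"
  obtains y where "y \<in> carrier_vec n" "A *\<^sub>v y = vec n b"
proof -
  have "det A \<noteq> 0" using det_0_iff_vec_prod_zero_field[OF A] ker by blast
  then have "A \<in> Units (ring_mat TYPE('a) n ())" by (rule det_non_zero_imp_unit[OF A])
  then obtain B where B: "B \<in> carrier_mat n n" "A * B = 1\<^sub>m n"
    by (auto simp: Units_def ring_mat_simps)
  have "A *\<^sub>v (B *\<^sub>v vec n b) = vec n b" using A B by (simp add: assoc_mult_mat_vec[symmetric])
  moreover have "B *\<^sub>v vec n b \<in> carrier_vec n" using B by simp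
  ultimately show ?thesis by (rule that[rotated])
qed

section \<open>Trees\<close>

locale finite_tree =
  fixes V :: "'v set" and Adj :: "'v \<Rightarrow> 'v \<Rightarrow> bool"
  assumes tree: "is_tree V Adj"
begin

lemma finite_V: "finite V" using tree by (simp add: is_tree_def)
lemma Adj_in_V: "Adj a b \<Longrightarrow> a \<in> V \<and> b \<in> V" using tree by (simp add: is_tree_def)
lemma Adj_sym: "Adj a b \<Longrightarrow> Adj b a" using tree by (simp add: is_tree_def)
lemma Adj_irrefl: "\<not> Adj a a" using tree by (simp add: is_tree_def)
lemma connected_V_tree: "is_connected V Adj" using tree by (simp add: is_tree_def)
lemma card_edges_of: "card (edges_of Adj) = card V - 1" using tree by (simp add: is_tree_def)

lemma connected_in_mem: "connected_in S Adj x y \<Longrightarrow> x \<in> S \<Longrightarrow> y \<in> S"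
  unfolding connected_in_def by (induction rule: rtranclp_induct) auto

lemma connected_in_trans: "connected_in S Adj x y \<Longrightarrow> connected_in S Adj y z \<Longrightarrow> connected_in S Adj x z"
  unfolding connected_in_def by (rule rtranclp_trans)

lemma connected_in_step: "x \<in> S \<Longrightarrow> y \<in> S \<Longrightarrow> Adj x y \<Longrightarrow> connected_in S Adj x y"
  unfolding connected_in_def by auto

lemma connected_in_sym:
  assumes "connected_in S Adj a b" shows "connected_in S Adj b a"
  using assms unfolding connected_in_def
proof (induction rule: rtranclp_induct)
  case base then show ?case by simp
next
  case (step y z)
  then have "(\<lambda>a b. a \<in> S \<and> b \<in> S \<and> Adj a b) z y" using Adj_sym by auto
  then show ?case using step.IH by (rule converse_rtranclp_into_rtranclp)
qed

lemma connected_in_exit_edge: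
  assumes "connected_in S Adj c d" "c \<in> Y" "d \<notin> Y"
  shows "\<exists>y z. y \<in> Y \<and> y \<in> S \<and> z \<in> S \<and> z \<notin> Y \<and> Adj y z"
  using assms unfolding connected_in_def
proof (induction rule: rtranclp_induct)
  case (step b d)
  then show ?case by blast
qed simp

lemma connected_V: "a \<in> V \<Longrightarrow> b \<in> V \<Longrightarrow> connected_in V Adj a b"
  using connected_V_tree by (simp add: is_connected_def)

definition arcs :: "'v set \<Rightarrow> ('v \<times> 'v) set" where
  "arcs Y = {(c,d). c \<in> Y \<and> d \<in> Y \<and> Adj c d}"

lemma finite_arcs: "Y \<subseteq> V \<Longrightarrow> finite (arcs Y)"
  by (rule finite_subset[of _ "V \<times> V"]) (auto simp: arcs_def finite_V)

lemma card_arcs_extend: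
  assumes fS: "finite S" and SV: "S \<subseteq> V" and conn: "\<forall>a\<in>S. \<forall>b\<in>S. connected_in S Adj a b"
    and X: "X \<subseteq> S" "X \<noteq> {}"
  shows "card (arcs S) \<ge> card (arcs X) + 2 * card (S - X)"
  using X
proof (induction "card (S - X)" arbitrary: X rule: less_induct)
  case less
  show ?case
  proof (cases "S - X = {}")
    case True
    then have "S = X" using less.prems by auto
    then show ?thesis by simp
  next
    case False
    then obtain d where d: "d \<in> S" "d \<notin> X" by auto
    obtain c where c: "c \<in> X" using less.prems by auto
    then have "c \<in> S" using less.prems by auto
    then have "connected_in S Adj c d" using conn d by auto
    then obtain y z where yz: "y \<in> X" "z \<in> S" "z \<notin> X" "Adj y z"
      using connected_in_exit_edge c d by blast
    let ?X = "insert z X"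
    have X': "?X \<subseteq> S" "?X \<noteq> {}" using yz less.prems by auto
    have cardlt: "card (S - ?X) < card (S - X)"
      using fS yz by (intro psubset_card_mono) blast+
    have c1: "card (S - X) = Suc (card (S - ?X))"
    proof -
      have eq: "S - X = insert z (S - ?X)" using yz by auto
      have "card (insert z (S - ?X)) = Suc (card (S - ?X))"
        using fS by (intro card_insert_disjoint) auto
      then show ?thesis unfolding eq .
    qed
    have IH: "card (arcs S) \<ge> card (arcs ?X) + 2 * card (S - ?X)"
      using less.hyps[OF cardlt X'] .
    have yzne: "y \<noteq> z" using yz by auto
    have zy: "Adj z y" using yz(4) by (rule Adj_sym)
    have yS: "y \<in> S" using yz less.prems by auto
    have sub: "arcs X \<union> {(y,z),(z,y)} \<subseteq> arcs ?X"
      using yz zy by (auto simp: arcs_def)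
    have disj: "arcs X \<inter> {(y,z),(z,y)} = {}" using yz by (auto simp: arcs_def)
    have fPX: "finite (arcs X)" using less.prems SV by (intro finite_arcs) auto
    have "card (arcs X) + 2 = card (arcs X \<union> {(y,z),(z,y)})"
      using fPX disj yzne by (simp add: card_Un_disjoint)
    also have "\<dots> \<le> card (arcs ?X)"
    proof (rule card_mono[OF _ sub])
      show "finite (arcs ?X)" using X' SV by (intro finite_arcs) auto
    qed
    finally show ?thesis using IH c1 by simp
  qed
qed

lemma arcs_singleton: "card (arcs {w}) = 0"
proof -
  have "arcs {w} = {}" using Adj_irrefl by (auto simp: arcs_def)
  then show ?thesis by simp
qed

lemma card_arcs_connected:
  assumes fS: "finite S" and SV: "S \<subseteq> V" and conn: "\<forall>a\<in>S. \<forall>b\<in>S. connected_in S Adj a b"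
    and ne: "S \<noteq> {}"
  shows "card (arcs S) + 2 \<ge> 2 * card S"
proof -
  obtain w where w: "w \<in> S" using ne by auto
  have "card (arcs S) \<ge> card (arcs {w}) + 2 * card (S - {w})"
    using card_arcs_extend[OF fS SV conn, of "{w}"] w by auto
  moreover have "card S = Suc (card (S - {w}))" using card_Suc_Diff1[OF fS w] by simp
  ultimately show ?thesis by (simp add: arcs_singleton)
qed

lemma card_arcs_V: "card (arcs V) = 2 * card (edges_of Adj)"
proof -
  define A where "A E = {(c,d). Adj c d \<and> {c,d} = E}" for E
  have fE: "finite (edges_of Adj)"
  proof -
    have "edges_of Adj \<subseteq> Pow V" using Adj_in_V by (auto simp: edges_of_def)
    then show ?thesis using finite_V finite_subset by blast
  qed
  have "arcs V = (\<Union>E\<in>edges_of Adj. A E)"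
    using Adj_in_V by (auto simp: arcs_def A_def edges_of_def)
  moreover have "card (\<Union>E\<in>edges_of Adj. A E) = (\<Sum>E\<in>edges_of Adj. card (A E))"
  proof (rule card_UN_disjoint[OF fE])
    show "\<forall>i\<in>edges_of Adj. finite (A i)"
    proof
      fix E assume "E \<in> edges_of Adj"
      have "A E \<subseteq> V \<times> V" using Adj_in_V by (auto simp: A_def)
      then show "finite (A E)" using finite_V finite_subset by blast
    qed
    show "\<forall>i\<in>edges_of Adj. \<forall>j\<in>edges_of Adj. i \<noteq> j \<longrightarrow> A i \<inter> A j = {}"
      by (auto simp: A_def)
  qed
  moreover have "card (A E) = 2" if EE: "E \<in> edges_of Adj" for E
  proof -
    obtain a b where ab: "E = {a,b}" "Adj a b" using EE unfolding edges_of_def by blast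
    have "a \<noteq> b" using ab Adj_irrefl by auto
    have ba: "Adj b a" using ab(2) by (rule Adj_sym)
    have "A E = {(a,b),(b,a)}" using ab ba by (auto simp: A_def doubleton_eq_iff)
    then show ?thesis using \<open>a \<noteq> b\<close> by simp
  qed
  ultimately show ?thesis by simp
qed

definition component :: "'v set \<Rightarrow> 'v \<Rightarrow> 'v set" where
  "component R a = {c. connected_in R Adj a c}"

lemma component_subset: "a \<in> R \<Longrightarrow> component R a \<subseteq> R"
  using connected_in_mem by (auto simp: component_def)

lemma component_closed:
  assumes "c \<in> component R a" "d \<in> R" "c \<in> R" "Adj c d"
  shows "d \<in> component R a"
proof -
  have "connected_in R Adj a c" using assms(1) by (simp add: component_def)
  moreover have "connected_in R Adj c d" by (rule connected_in_step[OF assms(3) assms(2) assms(4)])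
  ultimately have "connected_in R Adj a d" by (rule connected_in_trans)
  then show ?thesis by (simp add: component_def)
qed

lemma component_path:
  assumes "connected_in R Adj c d" "c \<in> component R a"
  shows "connected_in (component R a) Adj c d"
  using assms unfolding connected_in_def
proof (induction rule: rtranclp_induct)
  case base then show ?case by simp
next
  case (step b d)
  have cb: "connected_in (component R a) Adj c b" using step.IH step.prems by (simp add: connected_in_def)
  have bK: "b \<in> component R a" by (rule connected_in_mem[OF cb step.prems])
  have bd: "b \<in> R" "d \<in> R" "Adj b d" using step.hyps(2) by auto
  have dK: "d \<in> component R a" by (rule component_closed[OF bK bd(2) bd(1) bd(3)])
  have "connected_in (component R a) Adj b d" by (rule connected_in_step[OF bK dK bd(3)])
  then have "connected_in (component R a) Adj c d" by (rule connected_in_trans[OF cb])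
  then show ?case by (simp add: connected_in_def)
qed

lemma component_connected:
  assumes "c \<in> component R a" "d \<in> component R a"
  shows "connected_in (component R a) Adj c d"
proof -
  have "connected_in R Adj a c" using assms(1) by (simp add: component_def)
  then have "connected_in R Adj c a" by (rule connected_in_sym)
  moreover have "connected_in R Adj a d" using assms(2) by (simp add: component_def)
  ultimately have "connected_in R Adj c d" by (rule connected_in_trans)
  then show ?thesis using component_path assms(1) by blast
qed

lemma component_self: "a \<in> component R a"
  by (simp add: component_def connected_in_def)

text \<open>Otherwise the connected sets \<open>V2\<close> and \<open>K\<close> together with the four arcs to \<open>w1, w2\<close> would
  force \<open>card (arcs V) \<ge> 2 * card V\<close>, too many arcs for a tree.\<close>
lemma outside_component_single_attachment:
  assumes V2: "V2 \<subseteq> V" and c2: "is_connected V2 Adj"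
    and a: "a \<in> V - V2" and ab: "connected_in (V - V2) Adj a b"
    and w: "w1 \<in> V2" "w2 \<in> V2" "Adj a w1" "Adj b w2"
  shows "w1 = w2"
proof (rule ccontr)
  assume ne: "w1 \<noteq> w2"
  let ?R = "V - V2"
  let ?K = "component ?R a"
  have KR: "?K \<subseteq> ?R" using component_subset a by blast
  have aK: "a \<in> ?K" by (rule component_self)
  have bK: "b \<in> ?K" using ab by (simp add: component_def)
  have fK: "finite ?K" using KR finite_V finite_subset by blast
  have fV2: "finite V2" using V2 finite_V finite_subset by blast
  have KV: "?K \<subseteq> V" using KR by auto
  have PK: "card (arcs ?K) + 2 \<ge> 2 * card ?K"
    using card_arcs_connected[OF fK KV] component_connected aK by blast
  have PV2: "card (arcs V2) + 2 \<ge> 2 * card V2"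
    using card_arcs_connected[OF fV2 V2] c2 by (auto simp: is_connected_def)
  let ?X = "V2 \<union> ?K"
  have disjVK: "V2 \<inter> ?K = {}" using KR by auto
  let ?N = "{(a,w1),(w1,a),(b,w2),(w2,b)}"
  have sub: "arcs V2 \<union> arcs ?K \<union> ?N \<subseteq> arcs ?X"
  proof -
    have "Adj w1 a" "Adj w2 b" using Adj_sym[OF w(3)] Adj_sym[OF w(4)] by auto
    then show ?thesis using w aK bK by (auto simp: arcs_def)
  qed
  have "a \<notin> V2" "b \<notin> V2" using aK bK KR by auto
  then have d: "a \<noteq> w1" "a \<noteq> w2" "b \<noteq> w1" "b \<noteq> w2" using w by auto
  have cN: "card ?N = 4" using ne d by (simp add: card_insert_if)
  have d1: "arcs V2 \<inter> arcs ?K = {}" using disjVK by (auto simp: arcs_def)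
  have d2: "(arcs V2 \<union> arcs ?K) \<inter> ?N = {}" using disjVK aK bK w by (auto simp: arcs_def)
  have f1: "finite (arcs V2)" "finite (arcs ?K)" using V2 KV by (auto intro: finite_arcs)
  have "card (arcs V2) + card (arcs ?K) + 4 = card (arcs V2 \<union> arcs ?K \<union> ?N)"
  proof -
    have "card (arcs V2 \<union> arcs ?K) = card (arcs V2) + card (arcs ?K)"
      by (rule card_Un_disjoint) (use f1 d1 in auto)
    moreover have "card ((arcs V2 \<union> arcs ?K) \<union> ?N) = card (arcs V2 \<union> arcs ?K) + card ?N"
      by (rule card_Un_disjoint) (use f1 d2 in auto)
    ultimately show ?thesis using cN by simp
  qed
  also have "\<dots> \<le> card (arcs ?X)" using sub V2 KV by (intro card_mono finite_arcs) auto
  finally have PX: "card (arcs V2) + card (arcs ?K) + 4 \<le> card (arcs ?X)" .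
  have cX: "card ?X = card V2 + card ?K" using fV2 fK disjVK by (simp add: card_Un_disjoint)
  have XV: "?X \<subseteq> V" using V2 KV by auto
  have "card (arcs V) \<ge> card (arcs ?X) + 2 * card (V - ?X)"
    using card_arcs_extend[OF finite_V subset_refl _ XV] connected_V_tree w by (auto simp: is_connected_def)
  moreover have "card V = card ?X + card (V - ?X)"
    using finite_V XV by (metis card_Un_disjoint Diff_disjoint Un_Diff_cancel Un_absorb1 finite_Diff finite_subset)
  ultimately have "card (arcs V) \<ge> 2 * card V" using PX PK PV2 cX by linarith
  moreover have "card V \<ge> 1" using w V2 finite_V card_0_eq by fastforce
  ultimately show False using card_arcs_V card_edges_of by linarith
qed

definition out_arcs :: "'v set \<Rightarrow> ('v \<times> 'v) set" where
  "out_arcs K = {(c,d). c \<in> K \<and> d \<in> V \<and> d \<notin> K \<and> Adj c d}"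

lemma finite_out_arcs: "finite (out_arcs K)"
  by (rule finite_subset[of _ "V \<times> V"]) (auto simp: out_arcs_def finite_V dest: Adj_in_V)

lemma sum_valency_eq_card_arcs:
  assumes K: "K \<subseteq> V"
  shows "(\<Sum>v\<in>K. valency V Adj v) = card (arcs K) + card (out_arcs K)"
proof -
  have fK: "finite K" using K finite_V finite_subset by blast
  have "(\<Sum>v\<in>K. valency V Adj v) = card (Sigma K (\<lambda>v. {w\<in>V. Adj v w}))"
    unfolding valency_def using fK finite_V by (subst card_SigmaI) auto
  also have "Sigma K (\<lambda>v. {w\<in>V. Adj v w}) = arcs K \<union> out_arcs K"
    using K Adj_in_V by (auto simp: arcs_def out_arcs_def)
  also have "card (arcs K \<union> out_arcs K) = card (arcs K) + card (out_arcs K)"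
    by (rule card_Un_disjoint[OF finite_arcs[OF K] finite_out_arcs]) (auto simp: arcs_def out_arcs_def)
  finally show ?thesis .
qed

lemma component_eq: "connected_in A Adj a b \<Longrightarrow> component A a = component A b"
  unfolding component_def using connected_in_sym connected_in_trans by blast

lemma sum_over_components:
  assumes "finite A"
  shows "(\<Sum>v\<in>A. f v) = (\<Sum>K\<in>component A ` A. \<Sum>v\<in>K. f v)"
proof -
  have cover: "\<Union>(component A ` A) = A" using component_self by (auto dest: component_subset)
  have "K \<inter> L = {}" if KL: "K \<in> component A ` A" "L \<in> component A ` A" "K \<noteq> L" for K L
  proof (rule ccontr)
    assume "K \<inter> L \<noteq> {}"
    then obtain c where c: "c \<in> K" "c \<in> L" by blast
    obtain a b where ab: "K = component A a" "L = component A b" using KL(1,2) by blast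
    then have "K = component A c" "L = component A c"
      using c component_eq by (auto simp: component_def)
    with \<open>K \<noteq> L\<close> show False by simp
  qed
  moreover have "finite K" if "K \<in> component A ` A" for K
    using that assms component_subset finite_subset by blast
  ultimately show ?thesis
    using assms by (subst (1) cover[symmetric], subst sum.Union_disjoint) auto
qed

text \<open>A connected set has at least \<open>2 * (card K - 1)\<close> internal arcs.\<close>
lemma sum_valency_minus_2_nonneg:
  assumes K: "K \<subseteq> V" "K \<noteq> {}" and conn: "\<forall>c\<in>K. \<forall>d\<in>K. connected_in K Adj c d"
    and out: "card (out_arcs K) \<ge> 2"
  shows "0 \<le> (\<Sum>v\<in>K. int (valency V Adj v) - 2)"
proof -
  have "finite K" using K finite_V finite_subset by blast
  then have "card (arcs K) + 2 \<ge> 2 * card K" using card_arcs_connected K conn by blast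
  moreover have "(\<Sum>v\<in>K. int (valency V Adj v) - 2) = int (card (arcs K)) + int (card (out_arcs K)) - 2 * int (card K)"
    using sum_valency_eq_card_arcs[OF K(1)] by (simp add: sum_subtractf flip: of_nat_sum)
  ultimately show ?thesis using out by linarith
qed

end

section \<open>Dual vectors of full subgraphs\<close>

locale plumbing_tree = finite_tree V Adj for V :: "'v set" and Adj +
  fixes e :: "'v \<Rightarrow> int"
  assumes negdef: "neg_definite V Adj e"
begin

lemma inter_sym: "inter Adj e a b = inter Adj e b a"
  by (auto simp: inter_def intro: Adj_sym)

text \<open>\<open>pair_sub S x w\<close> is \<open>(x, E_w)\<close> in the plumbing graph of the full subgraph on \<open>S\<close>, and
  \<open>dual_sub S v\<close> below is the dual vector \<open>E_v^*\<close> of that subgraph.\<close>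
definition pair_sub :: "'v set \<Rightarrow> ('v \<Rightarrow> rat) \<Rightarrow> 'v \<Rightarrow> rat" where
  "pair_sub S x w = (\<Sum>a\<in>S. x a * inter Adj e a w)"

lemma pair_E_eq_pair_sub: "pair_E V Adj e = pair_sub V"
  by (intro ext) (simp add: pair_E_def pair_sub_def)

lemma form_eq_sum_pair_sub: "form V Adj e x y = (\<Sum>b\<in>V. y b * pair_sub V x b)"
  unfolding form_def pair_sub_def
  by (subst sum.swap) (simp add: sum_distrib_left mult_ac)

lemma pair_sub_supported:
  assumes "S \<subseteq> V" "\<forall>w. w \<notin> S \<longrightarrow> x w = 0"
  shows "pair_sub V x b = pair_sub S x b"
  unfolding pair_sub_def using assms finite_V
  by (intro sum.mono_neutral_right) auto

lemma pair_sub_diff: "pair_sub S (\<lambda>a. x a - y a) w = pair_sub S x w - pair_sub S y w"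
  by (simp add: pair_sub_def sum_subtractf left_diff_distrib)

lemma pair_sub_eq_0_imp_zero:
  assumes S: "S \<subseteq> V" and sx: "\<forall>w. w \<notin> S \<longrightarrow> x w = 0" and p: "\<forall>w\<in>S. pair_sub S x w = 0"
  shows "x w = 0"
proof -
  have "form V Adj e x x = (\<Sum>b\<in>V. x b * pair_sub S x b)"
    by (simp add: form_eq_sum_pair_sub pair_sub_supported[OF S sx])
  also have "\<dots> = 0" using p sx by (intro sum.neutral) auto
  finally have "\<not> (\<exists>v\<in>V. x v \<noteq> 0)" using negdef by (auto simp: neg_definite_def)
  then show ?thesis using sx S by blast
qed

lemma pair_sub_solution_unique:
  assumes S: "S \<subseteq> V"
    and x: "\<forall>w\<in>S. pair_sub S x w = c w" "\<forall>w. w \<notin> S \<longrightarrow> x w = 0"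
    and y: "\<forall>w\<in>S. pair_sub S y w = c w" "\<forall>w. w \<notin> S \<longrightarrow> y w = 0"
  shows "x = y"
proof
  fix w
  have "(\<lambda>a. x a - y a) w = 0"
    by (rule pair_sub_eq_0_imp_zero[OF S]) (use x y in \<open>auto simp: pair_sub_diff\<close>)
  then show "x w = y w" by simp
qed

text \<open>Existence of the solutions is finite-dimensional linear algebra: in coordinates given by an
  enumeration \<open>h\<close> of \<open>S\<close>, \<open>pair_sub S\<close> is the intersection matrix of \<open>S\<close>, whose kernel is
  trivial by \<open>pair_sub_eq_0_imp_zero\<close>.\<close>
lemma pair_sub_solution_exists:
  assumes S: "S \<subseteq> V"
  shows "\<exists>x. (\<forall>w\<in>S. pair_sub S x w = c w) \<and> (\<forall>w. w \<notin> S \<longrightarrow> x w = 0)"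
proof -
  have fS: "finite S" using S finite_V finite_subset by blast
  define n where "n = card S"
  obtain h where h: "bij_betw h {0..<n} S" using ex_bij_betw_nat_finite[OF fS] n_def by blast
  have hS: "h j \<in> S" "inv_into {0..<n} h (h j) = j" if "j < n" for j
    using h that by (auto simp: bij_betw_def)
  have S_h: "\<exists>i<n. w = h i" if "w \<in> S" for w
    using h that by (auto simp: bij_betw_def)
  define A :: "rat mat" where "A = mat n n (\<lambda>(i,j). inter Adj e (h j) (h i))"
  have A: "A \<in> carrier_mat n n" by (simp add: A_def)
  define phi where "phi y = (\<lambda>a. if a \<in> S then y $ (inv_into {0..<n} h a) else 0)" for y :: "rat vec"
  have phi_supp: "\<forall>w. w \<notin> S \<longrightarrow> phi y w = 0" for y by (simp add: phi_def)
  have phi_h: "phi y (h j) = y $ j" if "j < n" for y j using hS[OF that] by (simp add: phi_def)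
  have key: "pair_sub S (phi y) (h i) = (A *\<^sub>v y) $ i" if i: "i < n" and y: "y \<in> carrier_vec n" for i y
  proof -
    have "pair_sub S (phi y) (h i) = (\<Sum>j\<in>{0..<n}. phi y (h j) * inter Adj e (h j) (h i))"
      unfolding pair_sub_def by (rule sum.reindex_bij_betw[symmetric, OF h])
    also have "\<dots> = (\<Sum>j\<in>{0..<n}. A $$ (i,j) * y $ j)"
      using i phi_h by (intro sum.cong refl) (simp add: A_def)
    also have "\<dots> = (A *\<^sub>v y) $ i"
      using i y A by (simp add: scalar_prod_def row_def)
    finally show ?thesis .
  qed
  have "y = 0\<^sub>v n" if y: "y \<in> carrier_vec n" "A *\<^sub>v y = 0\<^sub>v n" for y
  proof -
    have "\<forall>w\<in>S. pair_sub S (phi y) w = 0" using key y S_h by fastforce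
    then have "phi y w = 0" for w using pair_sub_eq_0_imp_zero[OF S phi_supp] by blast
    then have "y $ i = 0" if "i < n" for i using phi_h[OF that, of y] by simp
    then show ?thesis using y by (intro eq_vecI) auto
  qed
  then obtain y where y: "y \<in> carrier_vec n" "A *\<^sub>v y = vec n (\<lambda>i. c (h i))"
    using mat_mult_vec_solvable[OF A] by blast
  have "\<forall>w\<in>S. pair_sub S (phi y) w = c w" using key y S_h by fastforce
  then show ?thesis using phi_supp by blast
qed

definition dual_sub :: "'v set \<Rightarrow> 'v \<Rightarrow> ('v \<Rightarrow> rat)" where
  "dual_sub S v = (THE x. (\<forall>w\<in>S. pair_sub S x w = (if w = v then -1 else 0)) \<and> (\<forall>w. w \<notin> S \<longrightarrow> x w = 0))"

lemma dual_sub_ex1: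
  assumes S: "S \<subseteq> V"
  shows "\<exists>!x. (\<forall>w\<in>S. pair_sub S x w = (if w = v then -1 else 0)) \<and> (\<forall>w. w \<notin> S \<longrightarrow> x w = 0)"
proof -
  obtain x where x: "(\<forall>w\<in>S. pair_sub S x w = (if w = v then -1 else 0)) \<and> (\<forall>w. w \<notin> S \<longrightarrow> x w = 0)"
    using pair_sub_solution_exists[OF S, of "\<lambda>w. if w = v then -1 else 0"] by blast
  show ?thesis
  proof (rule ex1I[where a=x])
    fix y assume "(\<forall>w\<in>S. pair_sub S y w = (if w = v then -1 else 0)) \<and> (\<forall>w. w \<notin> S \<longrightarrow> y w = 0)"
    then show "y = x" using x pair_sub_solution_unique[OF S, where c="\<lambda>w. if w = v then -1 else 0"] by blast
  qed (rule x)
qed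

lemma dual_sub_spec:
  assumes S: "S \<subseteq> V"
  shows "(\<forall>w\<in>S. pair_sub S (dual_sub S v) w = (if w = v then -1 else 0)) \<and> (\<forall>w. w \<notin> S \<longrightarrow> dual_sub S v w = 0)"
  unfolding dual_sub_def by (rule theI'[OF dual_sub_ex1[OF S]])

lemma dual_sub_pair: "S \<subseteq> V \<Longrightarrow> w \<in> S \<Longrightarrow> pair_sub S (dual_sub S v) w = (if w = v then -1 else 0)"
  using dual_sub_spec by blast
lemma dual_sub_outside: "S \<subseteq> V \<Longrightarrow> w \<notin> S \<Longrightarrow> dual_sub S v w = 0"
  using dual_sub_spec by blast
lemma dual_sub_unique:
  assumes "S \<subseteq> V" "\<forall>w\<in>S. pair_sub S x w = (if w = v then -1 else 0)" "\<forall>w. w \<notin> S \<longrightarrow> x w = 0"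
  shows "x = dual_sub S v"
  using pair_sub_solution_unique[OF assms(1) assms(2,3)] dual_sub_spec[OF assms(1)] by blast

lemma Edual_eq_dual_sub: "Edual V Adj e v = dual_sub V v"
  by (simp add: Edual_def dual_sub_def pair_E_eq_pair_sub)

lemma euler_neg: "w \<in> V \<Longrightarrow> e w < 0"
proof -
  assume w: "w \<in> V"
  define x :: "'v \<Rightarrow> rat" where "x a = (if a = w then 1 else 0)" for a
  have xx: "x a * x b * inter Adj e a b = (if a = w then (if b = w then inter Adj e w w else 0) else 0)" for a b
    by (simp add: x_def)
  have "form V Adj e x x = (\<Sum>a\<in>V. \<Sum>b\<in>V. x a * x b * inter Adj e a b)" by (simp add: form_def)
  also have "\<dots> = (\<Sum>a\<in>V. (if a = w then (\<Sum>b\<in>V. (if b = w then inter Adj e w w else 0)) else 0))"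
    unfolding xx by (intro sum.cong refl) auto
  also have "\<dots> = inter Adj e w w" using finite_V w by simp
  also have "\<dots> = of_int (e w)" by (simp add: inter_def)
  finally have "form V Adj e x x = of_int (e w)" .
  moreover have "form V Adj e x x < 0" using negdef w by (auto simp: neg_definite_def x_def)
  ultimately show ?thesis by simp
qed

lemma pair_sub_expand:
  assumes "S \<subseteq> V" "w \<in> S"
  shows "pair_sub S x w = x w * of_int (e w) + (\<Sum>a\<in>{a\<in>S. Adj a w}. x a)"
proof -
  have fS: "finite S" using assms finite_V finite_subset by blast
  have "pair_sub S x w = x w * inter Adj e w w + (\<Sum>a\<in>S - {w}. x a * inter Adj e a w)"
    unfolding pair_sub_def using fS assms by (simp add: sum.remove)
  also have "(\<Sum>a\<in>S - {w}. x a * inter Adj e a w) = (\<Sum>a\<in>S - {w}. if Adj a w then x a else 0)"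
    by (intro sum.cong refl) (auto simp: inter_def)
  also have "\<dots> = (\<Sum>a\<in>{a\<in>S - {w}. Adj a w}. x a)"
    by (rule sum.inter_filter[symmetric]) (use fS in simp)
  also have "{a\<in>S - {w}. Adj a w} = {a\<in>S. Adj a w}" using Adj_irrefl by auto
  finally show ?thesis by (simp add: inter_def)
qed

lemma pair_sub_add: "pair_sub S (\<lambda>a. x a + y a) w = pair_sub S x w + pair_sub S y w"
  by (simp add: pair_sub_def sum.distrib distrib_right)

lemma dual_sub_nonneg:
  assumes S: "S \<subseteq> V" and v: "v \<in> S"
  shows "dual_sub S v w \<ge> 0"
proof -
  have fS: "finite S" using assms finite_V finite_subset by blast
  define x where "x = dual_sub S v"
  define y where "y a = min (x a) 0" for a
  define z where "z a = max (x a) 0" for a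
  have xyz: "x = (\<lambda>a. y a + z a)" by (auto simp: y_def z_def)
  have xout: "\<forall>a. a \<notin> S \<longrightarrow> x a = 0" using dual_sub_outside[OF S] by (simp add: x_def)
  have yout: "\<forall>a. a \<notin> S \<longrightarrow> y a = 0" using xout by (simp add: y_def)
  have T1: "(\<Sum>b\<in>S. y b * pair_sub S x b) = - y v"
  proof -
    have "(\<Sum>b\<in>S. y b * pair_sub S x b) = (\<Sum>b\<in>S. if b = v then - y b else 0)"
      using dual_sub_pair[OF S] by (intro sum.cong refl) (simp add: x_def)
    also have "\<dots> = - y v" using fS v by simp
    finally show ?thesis .
  qed
  have T2: "(\<Sum>b\<in>S. y b * pair_sub S z b) \<le> 0"
    unfolding pair_sub_def sum_distrib_left
  proof (intro sum_nonpos)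
    fix b a
    show "y b * (z a * inter Adj e a b) \<le> 0"
    proof (cases "a = b")
      case True
      then have "y b * z a = 0" by (auto simp: y_def z_def)
      then show ?thesis by (metis mult.assoc mult_zero_left order_refl)
    next
      case False
      then have "inter Adj e a b \<ge> 0" by (simp add: inter_def)
      moreover have "y b \<le> 0" "z a \<ge> 0" by (auto simp: y_def z_def)
      ultimately show ?thesis by (simp add: mult_nonpos_nonneg)
    qed
  qed
  have "form V Adj e y y = (\<Sum>b\<in>S. y b * pair_sub S y b)"
  proof -
    have "form V Adj e y y = (\<Sum>b\<in>V. y b * pair_sub S y b)" by (simp add: form_eq_sum_pair_sub pair_sub_supported[OF S yout])
    also have "\<dots> = (\<Sum>b\<in>S. y b * pair_sub S y b)"
      using S finite_V yout by (intro sum.mono_neutral_right) auto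
    finally show ?thesis .
  qed
  also have "(\<Sum>b\<in>S. y b * pair_sub S y b) = (\<Sum>b\<in>S. y b * pair_sub S x b) - (\<Sum>b\<in>S. y b * pair_sub S z b)"
    by (simp add: xyz pair_sub_add sum_subtractf[symmetric] distrib_left)
  finally have "form V Adj e y y \<ge> - y v" using T1 T2 by simp
  moreover have "y v \<le> 0" by (simp add: y_def)
  ultimately have "\<not> form V Adj e y y < 0" by simp
  then have "\<forall>a\<in>V. y a = 0" using negdef by (auto simp: neg_definite_def)
  then show ?thesis
    using xout S by (cases "w \<in> V") (auto simp: y_def x_def min_def split: if_splits)
qed

lemma dual_sub_self_pos:
  assumes S: "S \<subseteq> V" and v: "v \<in> S"
  shows "dual_sub S v v > 0"
proof (rule ccontr)
  assume "\<not> dual_sub S v v > 0"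
  then have z: "dual_sub S v v = 0" using dual_sub_nonneg[OF S v, of v] by simp
  have "pair_sub S (dual_sub S v) v = (\<Sum>a\<in>{a\<in>S. Adj a v}. dual_sub S v a)"
    using pair_sub_expand[OF S v] z by simp
  also have "\<dots> \<ge> 0" using dual_sub_nonneg[OF S v] by (intro sum_nonneg) auto
  finally show False using dual_sub_pair[OF S v, of v] by simp
qed

lemma dual_sub_pos:
  assumes S: "S \<subseteq> V" and v: "v \<in> S" and w: "w \<in> S"
    and conn: "connected_in S Adj w v"
  shows "dual_sub S v w > 0"
proof (rule ccontr)
  let ?x = "dual_sub S v"
  assume "\<not> ?x w > 0"
  then have z: "?x w = 0" using dual_sub_nonneg[OF S v, of w] by simp
  have "connected_in S Adj w b \<Longrightarrow> ?x b = 0" for b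
    unfolding connected_in_def
  proof (induction rule: rtranclp_induct)
    case base then show ?case by (rule z)
  next
    case (step b c)
    then have b: "b \<in> S" "c \<in> S" "Adj b c" by auto
    have "b \<noteq> v" using dual_sub_self_pos[OF S v] step.IH by auto
    then have "0 = pair_sub S ?x b" using dual_sub_pair[OF S b(1)] by simp
    also have "\<dots> = (\<Sum>a\<in>{a\<in>S. Adj a b}. ?x a)" using pair_sub_expand[OF S b(1)] step.IH by simp
    finally have "(\<Sum>a\<in>{a\<in>S. Adj a b}. ?x a) = 0" by simp
    moreover have "finite {a\<in>S. Adj a b}" by (rule finite_subset[of _ V]) (use S finite_V in auto)
    ultimately have "\<forall>a\<in>{a\<in>S. Adj a b}. ?x a = 0"
      using sum_nonneg_eq_0_iff dual_sub_nonneg[OF S v] by blast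
    then show ?case using b Adj_sym by auto
  qed
  then have "?x v = 0" using conn by blast
  then show False using dual_sub_self_pos[OF S v] by simp
qed

lemma dual_sub_sym:
  assumes S: "S \<subseteq> V" and v: "v \<in> S" and w: "w \<in> S"
  shows "dual_sub S v w = dual_sub S w v"
proof -
  have fS: "finite S" using assms finite_V finite_subset by blast
  let ?X = "dual_sub S v" and ?Y = "dual_sub S w"
  have "(\<Sum>b\<in>S. ?X b * pair_sub S ?Y b) = - ?X w"
  proof -
    have "(\<Sum>b\<in>S. ?X b * pair_sub S ?Y b) = (\<Sum>b\<in>S. if b = w then - ?X b else 0)"
      using dual_sub_pair[OF S] by (intro sum.cong refl) simp
    also have "\<dots> = - ?X w" using fS w by simp
    finally show ?thesis .
  qed
  moreover have "(\<Sum>b\<in>S. ?Y b * pair_sub S ?X b) = - ?Y v"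
  proof -
    have "(\<Sum>b\<in>S. ?Y b * pair_sub S ?X b) = (\<Sum>b\<in>S. if b = v then - ?Y b else 0)"
      using dual_sub_pair[OF S] by (intro sum.cong refl) simp
    also have "\<dots> = - ?Y v" using fS v by simp
    finally show ?thesis .
  qed
  moreover have "(\<Sum>b\<in>S. ?X b * pair_sub S ?Y b) = (\<Sum>b\<in>S. ?Y b * pair_sub S ?X b)"
    unfolding pair_sub_def sum_distrib_left
    by (subst sum.swap) (simp add: inter_sym mult_ac)
  ultimately show ?thesis by simp
qed

lemma pair_sub_outside:
  assumes "S \<subseteq> V" "b \<notin> S"
  shows "pair_sub S x b = (\<Sum>a\<in>{a\<in>S. Adj a b}. x a)"
proof -
  have fS: "finite S" using assms finite_V finite_subset by blast
  have "pair_sub S x b = (\<Sum>a\<in>S. if Adj a b then x a else 0)"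
    unfolding pair_sub_def using assms by (intro sum.cong refl) (auto simp: inter_def)
  also have "\<dots> = (\<Sum>a\<in>{a\<in>S. Adj a b}. x a)"
    by (rule sum.inter_filter[symmetric]) (use fS in simp)
  finally show ?thesis .
qed

lemma pair_sub_sum:
  assumes "finite W"
  shows "pair_sub S (\<lambda>a. \<Sum>w\<in>W. c w * f w a) b = (\<Sum>w\<in>W. c w * pair_sub S (f w) b)"
  unfolding pair_sub_def sum_distrib_left sum_distrib_right
  by (subst sum.swap) (simp add: mult_ac)

text \<open>The coefficient of \<open>E_w^*|_{V2}\<close> in \<open>E_v^*|_{V2}\<close>: subtracting from \<open>E_v^*\<close> the dual
  vector of \<open>v\<close> in \<open>T \ T2\<close> leaves a vector orthogonal to all \<open>E_b\<close>, \<open>b \<notin> V2\<close>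
  (\<open>dual_decompose\<close>).\<close>
definition dual_restr_coeff :: "'v set \<Rightarrow> 'v \<Rightarrow> 'v \<Rightarrow> rat" where
  "dual_restr_coeff V2 v w = (if v \<in> V2 then (if w = v then 1 else 0)
      else (\<Sum>a\<in>{a\<in>V - V2. Adj a w}. dual_sub (V - V2) v a))"

lemma dual_restr_coeff_nonneg: "v \<in> V \<Longrightarrow> dual_restr_coeff V2 v w \<ge> 0"
  unfolding dual_restr_coeff_def using dual_sub_nonneg[of "V - V2" v]
  by (auto intro: sum_nonneg)

lemma dual_decompose:
  assumes V2: "V2 \<subseteq> V" and v: "v \<in> V" "v \<notin> V2"
  shows "dual_sub V v = (\<lambda>b. dual_sub (V - V2) v b + (\<Sum>w\<in>V2. dual_restr_coeff V2 v w * dual_sub V w b))"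
proof -
  let ?R = "V - V2"
  let ?phi = "dual_sub ?R v"
  have R: "?R \<subseteq> V" by auto
  have fV2: "finite V2" using V2 finite_V finite_subset by blast
  have phiout: "\<forall>a. a \<notin> ?R \<longrightarrow> ?phi a = 0" using dual_sub_outside[OF R] by blast
  show ?thesis
  proof (rule dual_sub_unique[symmetric, OF subset_refl])
    show "\<forall>b. b \<notin> V \<longrightarrow> dual_sub ?R v b + (\<Sum>w\<in>V2. dual_restr_coeff V2 v w * dual_sub V w b) = 0"
      using phiout dual_sub_outside[OF subset_refl] by simp
    show "\<forall>b\<in>V. pair_sub V (\<lambda>b. dual_sub ?R v b + (\<Sum>w\<in>V2. dual_restr_coeff V2 v w * dual_sub V w b)) b = (if b = v then - 1 else 0)"
    proof
      fix b assume b: "b \<in> V"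
      have "pair_sub V (\<lambda>b. dual_sub ?R v b + (\<Sum>w\<in>V2. dual_restr_coeff V2 v w * dual_sub V w b)) b
          = pair_sub ?R ?phi b + (\<Sum>w\<in>V2. dual_restr_coeff V2 v w * (if b = w then -1 else 0))"
        using dual_sub_pair[OF subset_refl b] by (simp add: pair_sub_add pair_sub_sum[OF fV2] pair_sub_supported[OF R phiout])
      also have "\<dots> = (if b = v then - 1 else 0)"
      proof (cases "b \<in> V2")
        case True
        have "pair_sub ?R ?phi b = dual_restr_coeff V2 v b"
          using pair_sub_outside[OF R] True v by (simp add: dual_restr_coeff_def)
        then show ?thesis using True v fV2 by (simp add: if_distrib[of "\<lambda>x. _ * x"] cong: if_cong) auto
      next
        case False
        then have "b \<in> ?R" using b by simp
        then show ?thesis using dual_sub_pair[OF R] False by (auto intro!: sum.neutral)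
      qed
      finally show "pair_sub V (\<lambda>b. dual_sub ?R v b + (\<Sum>w\<in>V2. dual_restr_coeff V2 v w * dual_sub V w b)) b = (if b = v then - 1 else 0)" .
    qed
  qed
qed

lemma dual_restr_expansion:
  assumes V2: "V2 \<subseteq> V" and v: "v \<in> V" and b: "b \<in> V2"
  shows "dual_sub V v b = (\<Sum>w\<in>V2. dual_restr_coeff V2 v w * dual_sub V w b)"
proof (cases "v \<in> V2")
  case True
  have fV2: "finite V2" using V2 finite_V finite_subset by blast
  have "(\<Sum>w\<in>V2. dual_restr_coeff V2 v w * dual_sub V w b) = (\<Sum>w\<in>V2. if w = v then dual_sub V w b else 0)"
    using True by (intro sum.cong) (auto simp: dual_restr_coeff_def)
  then show ?thesis using True fV2 by simp
next
  case False
  have "dual_sub (V - V2) v b = 0" using dual_sub_outside[of "V - V2"] b by auto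
  then show ?thesis using dual_decompose[OF V2 v False] by simp
qed

lemma dual_comb_unique:
  assumes V2: "V2 \<subseteq> V" and eq: "dual_comb V Adj e V2 r = dual_comb V Adj e V2 r'"
  shows "\<forall>v\<in>V2. r v = r' v"
proof -
  have fV2: "finite V2" using V2 finite_V finite_subset by blast
  define s where "s v = r v - r' v" for v
  define y where "y b = (\<Sum>v\<in>V2. s v * dual_sub V v b)" for b
  have y0: "y b = 0" if "b \<in> V2" for b
  proof -
    have "(\<Sum>v\<in>V2. r v * dual_sub V v b) = (\<Sum>v\<in>V2. r' v * dual_sub V v b)"
      using fun_cong[OF eq, of b] that by (simp add: dual_comb_def restr_def Edual_eq_dual_sub)
    then show ?thesis by (simp add: y_def s_def left_diff_distrib sum_subtractf)
  qed
  have py: "pair_sub V y b = - (if b \<in> V2 then s b else 0)" if "b \<in> V" for b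
  proof -
    have "pair_sub V y b = (\<Sum>v\<in>V2. s v * (if b = v then -1 else 0))"
      unfolding y_def pair_sub_sum[OF fV2] using dual_sub_pair[OF subset_refl that] by simp
    also have "\<dots> = - (if b \<in> V2 then s b else 0)" using fV2 by (simp add: if_distrib cong: if_cong)
    finally show ?thesis .
  qed
  have "form V Adj e y y = (\<Sum>b\<in>V. y b * pair_sub V y b)" by (rule form_eq_sum_pair_sub)
  also have "\<dots> = 0" using py y0 by (intro sum.neutral) auto
  finally have "\<forall>a\<in>V. y a = 0" using negdef by (auto simp: neg_definite_def)
  then have p0: "pair_sub V y b = 0" for b by (simp add: pair_sub_def)
  show ?thesis
  proof
    fix v assume v: "v \<in> V2"
    then have "v \<in> V" using V2 by auto
    then have "s v = 0" using py[of v] p0[of v] v by simp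
    then show "r v = r' v" by (simp add: s_def)
  qed
qed

lemma Zred_support_dual_comb:
  assumes V2: "V2 \<subseteq> V" and m: "m \<in> Zred_support V Adj e V2"
  shows "\<exists>r. (\<forall>v\<in>V2. r v \<ge> 0) \<and> m = dual_comb V Adj e V2 r \<and>
            (\<forall>r'. (\<forall>v\<in>V2. r' v \<ge> 0) \<and> m = dual_comb V Adj e V2 r' \<longrightarrow> (\<forall>v\<in>V2. r' v = r v))"
proof -
  have "exps V Adj e V2 m \<noteq> {}"
    using m by (auto simp: Zred_support_def Zred_coeff_def)
  then obtain k where k: "k \<in> exps V Adj e V2 m" by blast
  then have m_eq: "m = restr V2 (\<lambda>w. \<Sum>v\<in>V. of_nat (k v) * Edual V Adj e v w)"
    by (simp add: exps_def)
  have fV2: "finite V2" using V2 finite_V finite_subset by blast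
  define r where "r w = (\<Sum>v\<in>V. of_nat (k v) * dual_restr_coeff V2 v w)" for w
  have rnn: "\<forall>v\<in>V2. r v \<ge> 0" unfolding r_def using dual_restr_coeff_nonneg by (auto intro!: sum_nonneg)
  have "m = dual_comb V Adj e V2 r"
  proof
    fix b
    show "m b = dual_comb V Adj e V2 r b"
    proof (cases "b \<in> V2")
      case True
      have "m b = (\<Sum>v\<in>V. of_nat (k v) * (\<Sum>w\<in>V2. dual_restr_coeff V2 v w * dual_sub V w b))"
        using True V2 dual_restr_expansion[OF V2 _ True] by (simp add: m_eq restr_def Edual_eq_dual_sub)
      also have "\<dots> = (\<Sum>w\<in>V2. r w * dual_sub V w b)"
        unfolding r_def sum_distrib_left sum_distrib_right
        by (subst sum.swap) (simp add: mult_ac)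
      finally show ?thesis using True by (simp add: dual_comb_def restr_def Edual_eq_dual_sub)
    next
      case False then show ?thesis by (simp add: m_eq dual_comb_def restr_def)
    qed
  qed
  moreover have "\<forall>r'. (\<forall>v\<in>V2. r' v \<ge> 0) \<and> m = dual_comb V Adj e V2 r' \<longrightarrow> (\<forall>v\<in>V2. r' v = r v)"
    using dual_comb_unique[OF V2] calculation by metis
  ultimately show ?thesis using rnn by blast
qed

lemma inter_across_component:
  assumes "a \<in> component S c" "a \<in> S" "b \<in> S" "b \<notin> component S c"
  shows "inter Adj e a b = 0" "inter Adj e b a = 0"
proof -
  have "\<not> Adj a b" using assms component_closed by blast
  then have "\<not> Adj b a" using Adj_sym by blast
  moreover have "a \<noteq> b" using assms by blast
  ultimately show "inter Adj e a b = 0" "inter Adj e b a = 0" using \<open>\<not> Adj a b\<close> by (auto simp: inter_def)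
qed

text \<open>The restriction of \<open>dual_sub S v\<close> to the component of \<open>v\<close> solves the same equations.\<close>
lemma dual_sub_outside_component:
  assumes S: "S \<subseteq> V" and v: "v \<in> S" and d: "d \<notin> component S v"
  shows "dual_sub S v d = 0"
proof -
  let ?phi = "dual_sub S v"
  let ?K = "component S v"
  define psi where "psi a = (if a \<in> ?K then ?phi a else 0)" for a
  have "pair_sub S psi b = (if b = v then - 1 else 0)" if b: "b \<in> S" for b
  proof (cases "b \<in> ?K")
    case True
    have "pair_sub S psi b = pair_sub S ?phi b"
      unfolding pair_sub_def using b True inter_across_component(2)[of b S v]
      by (intro sum.cong refl) (auto simp: psi_def)
    then show ?thesis using dual_sub_pair[OF S b] by simp
  next
    case False
    have "pair_sub S psi b = 0"
      unfolding pair_sub_def using b False inter_across_component(1)[of _ S v b]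
      by (intro sum.neutral) (auto simp: psi_def)
    moreover have "b \<noteq> v" using False component_self by auto
    ultimately show ?thesis by simp
  qed
  moreover have "\<forall>w. w \<notin> S \<longrightarrow> psi w = 0" using dual_sub_outside[OF S] by (simp add: psi_def)
  ultimately have "psi = ?phi" using dual_sub_unique[OF S] by blast
  then show ?thesis using d by (metis psi_def)
qed

lemma Edual_pos: "u \<in> V \<Longrightarrow> w \<in> V \<Longrightarrow> dual_sub V u w > 0"
  using dual_sub_pos[OF subset_refl] connected_V by blast

lemma scaled_dual_harmonic:
  assumes N: "\<forall>v\<in>V. of_nat (g v) = of_nat N * dual_sub V u v" and u: "u \<in> V"
    and k: "k \<in> V" "k \<noteq> u"
  shows "(\<Sum>a\<in>{a\<in>V. Adj a k}. g a) = nat (- e k) * g k"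
proof -
  have "0 = pair_sub V (dual_sub V u) k" using dual_sub_pair[OF subset_refl k(1)] k by simp
  also have "\<dots> = dual_sub V u k * of_int (e k) + (\<Sum>a\<in>{a\<in>V. Adj a k}. dual_sub V u a)"
    by (rule pair_sub_expand[OF subset_refl k(1)])
  finally have "0 = of_nat N * (dual_sub V u k * of_int (e k) + (\<Sum>a\<in>{a\<in>V. Adj a k}. dual_sub V u a))"
    by simp
  also have "\<dots> = of_nat (g k) * of_int (e k) + (\<Sum>a\<in>{a\<in>V. Adj a k}. of_nat (g a))"
    using N k Adj_in_V by (simp add: distrib_left sum_distrib_left mult.assoc[symmetric])
  finally have "(of_nat (\<Sum>a\<in>{a\<in>V. Adj a k}. g a) :: rat) = of_nat (g k) * of_int (- e k)"
    by (simp add: of_nat_sum)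
  also have "\<dots> = of_nat (nat (- e k) * g k)" using euler_neg[OF k(1)] by simp
  finally show ?thesis by (simp only: of_nat_eq_iff)
qed

lemma restr_sum_Edual_eq_dual_comb:
  assumes V2: "V2 \<subseteq> V"
  shows "restr V2 (\<lambda>w. \<Sum>v\<in>V. of_nat (k v) * Edual V Adj e v w)
       = dual_comb V Adj e V2 (\<lambda>w. \<Sum>v\<in>V. of_nat (k v) * dual_restr_coeff V2 v w)"
proof
  fix b
  show "restr V2 (\<lambda>w. \<Sum>v\<in>V. of_nat (k v) * Edual V Adj e v w) b
       = dual_comb V Adj e V2 (\<lambda>w. \<Sum>v\<in>V. of_nat (k v) * dual_restr_coeff V2 v w) b"
  proof (cases "b \<in> V2")
    case True
    have "(\<Sum>v\<in>V. of_nat (k v) * dual_sub V v b) = (\<Sum>v\<in>V. of_nat (k v) * (\<Sum>w\<in>V2. dual_restr_coeff V2 v w * dual_sub V w b))"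
      using dual_restr_expansion[OF V2 _ True] by (intro sum.cong refl) simp
    also have "\<dots> = (\<Sum>w\<in>V2. (\<Sum>v\<in>V. of_nat (k v) * dual_restr_coeff V2 v w) * dual_sub V w b)"
      unfolding sum_distrib_left sum_distrib_right
      by (subst sum.swap) (simp add: mult_ac)
    finally show ?thesis using True by (simp add: dual_comb_def restr_def Edual_eq_dual_sub)
  next
    case False then show ?thesis by (simp add: dual_comb_def restr_def)
  qed
qed

lemma dual_comb_cong:
  "\<forall>v\<in>V2. r v = r' v \<Longrightarrow> dual_comb V Adj e V2 r = dual_comb V Adj e V2 r'"
  unfolding dual_comb_def by (intro arg_cong[where f="restr V2"] ext sum.cong) auto

end

section \<open>The inequality at a boundary vertex\<close>

locale boundary_vertex = plumbing_tree V Adj e for V :: "'v set" and Adj e +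
  fixes V2 :: "'v set" and u :: 'v
  assumes V2: "V2 \<subseteq> V" and c2: "is_connected V2 Adj"
    and ub: "u \<in> boundary V Adj V2" and deg2: "card {w\<in>V2. Adj u w} \<ge> 2"
begin

abbreviation "R \<equiv> V - V2"
abbreviation "V1u \<equiv> V1 V Adj V2 u"
abbreviation "Eu \<equiv> dual_sub V u"

lemma uV2: "u \<in> V2" using ub by (simp add: boundary_def)
lemma uV: "u \<in> V" using uV2 V2 by auto

lemma V1_cases:
  assumes "v \<in> V1u" "v \<noteq> u"
  shows "v \<in> R \<and> (\<exists>y\<in>R. Adj u y \<and> connected_in R Adj y v)"
  using assms connected_in_mem by (auto simp: V1_def)

lemma V1_sub: "V1u \<subseteq> V"
  using V1_cases uV by blast

lemma V1_inter_V2: "v \<in> V1u \<Longrightarrow> v \<in> V2 \<Longrightarrow> v = u"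
  using V1_cases by blast

lemma u_in_V1: "u \<in> V1u" by (simp add: V1_def)

lemma finite_V1: "finite V1u" using V1_sub finite_V finite_subset by blast

lemma V1_neighbour:
  assumes k: "k \<in> V1u" "k \<noteq> u" and kw: "Adj k w"
  shows "w \<in> V1u"
proof -
  obtain y where y: "y \<in> R" "Adj u y" "connected_in R Adj y k" using V1_cases[OF k] by blast
  have kR: "k \<in> R" using V1_cases[OF k] by blast
  have wV: "w \<in> V" using Adj_in_V[OF kw] by simp
  show ?thesis
  proof (cases "w \<in> V2")
    case True
    have "Adj y u" using y(2) by (rule Adj_sym)
    then have "u = w" using outside_component_single_attachment[OF V2 c2 y(1) y(3) uV2 True _ kw] by simp
    then show ?thesis using u_in_V1 by simp
  next
    case False
    then have "w \<in> R" using wV by simp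
    then have "connected_in R Adj k w" using connected_in_step[OF kR _ kw] by simp
    then have "connected_in R Adj y w" using y(3) connected_in_trans by blast
    then show ?thesis using y by (auto simp: V1_def)
  qed
qed

lemma dual_restr_coeff_outside_V1:
  assumes v: "v \<in> V" "v \<notin> V1u"
  shows "dual_restr_coeff V2 v u = 0"
proof (cases "v \<in> V2")
  case True
  then have "v \<noteq> u" using v u_in_V1 by auto
  then show ?thesis using True by (simp add: dual_restr_coeff_def)
next
  case False
  have vR: "v \<in> R" using v False by simp
  have "(\<Sum>a\<in>{a\<in>R. Adj a u}. dual_sub R v a) = 0"
  proof (intro sum.neutral ballI)
    fix a assume a: "a \<in> {a\<in>R. Adj a u}"
    show "dual_sub R v a = 0"
    proof (rule dual_sub_outside_component[of R], simp, rule vR, rule notI)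
      assume "a \<in> component R v"
      then have "connected_in R Adj v a" by (simp add: component_def)
      then have "connected_in R Adj a v" by (rule connected_in_sym)
      moreover have "Adj u a" using a Adj_sym by blast
      ultimately have "v \<in> V1u" using a by (auto simp: V1_def)
      with v show False by simp
    qed
  qed
  then show ?thesis using False by (simp add: dual_restr_coeff_def)
qed

lemma dual_restr_coeff_V1_other:
  assumes v: "v \<in> V1u" and w: "w \<in> V2" "w \<noteq> u"
  shows "dual_restr_coeff V2 v w = 0"
proof (cases "v = u")
  case True
  then show ?thesis using w uV2 by (simp add: dual_restr_coeff_def)
next
  case False
  obtain y where y: "y \<in> R" "Adj u y" "connected_in R Adj y v" using V1_cases[OF v False] by blast
  have vR: "v \<in> R" using V1_cases[OF v False] by blast
  have "(\<Sum>a\<in>{a\<in>R. Adj a w}. dual_sub R v a) = 0"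
  proof (intro sum.neutral ballI)
    fix a assume a: "a \<in> {a\<in>R. Adj a w}"
    show "dual_sub R v a = 0"
    proof (rule dual_sub_outside_component[of R], simp, rule vR, rule notI)
      assume "a \<in> component R v"
      then have "connected_in R Adj v a" by (simp add: component_def)
      then have ya: "connected_in R Adj y a" using y(3) connected_in_trans by blast
      have "Adj y u" using y(2) by (rule Adj_sym)
      then have "u = w" using outside_component_single_attachment[OF V2 c2 y(1) ya uV2 w(1)] a by blast
      with w show False by simp
    qed
  qed
  then show ?thesis using vR by (simp add: dual_restr_coeff_def)
qed

lemma dual_restr_coeff_V1_u:
  assumes v: "v \<in> V1u"
  shows "dual_restr_coeff V2 v u = Eu v / Eu u"
proof -
  have vV: "v \<in> V" using v V1_sub by auto
  have Eu_pos: "Eu u > 0" using Edual_pos[OF uV uV] .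
  have fV2: "finite V2" using V2 finite_V finite_subset by blast
  have "dual_sub V v u = (\<Sum>w\<in>V2. dual_restr_coeff V2 v w * dual_sub V w u)"
    by (rule dual_restr_expansion[OF V2 vV uV2])
  also have "\<dots> = (\<Sum>w\<in>V2. if w = u then dual_restr_coeff V2 v u * dual_sub V u u else 0)"
    using dual_restr_coeff_V1_other[OF v] by (intro sum.cong refl) auto
  also have "\<dots> = dual_restr_coeff V2 v u * Eu u" using fV2 uV2 by simp
  finally have "dual_restr_coeff V2 v u * Eu u = Eu v" using dual_sub_sym[OF subset_refl vV uV] by simp
  then show ?thesis using Eu_pos by (simp add: field_simps)
qed

lemma card_out_arcs_ge_2_if_u_mem:
  assumes K: "K \<subseteq> V1u" "u \<in> K"
  shows "card (out_arcs K) \<ge> 2"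
proof -
  have "(\<lambda>w. (u,w)) ` {w\<in>V2. Adj u w} \<subseteq> out_arcs K"
  proof safe
    fix w assume w: "w \<in> V2" "Adj u w"
    have "w \<notin> K" using K V1_inter_V2 w Adj_irrefl by blast
    then show "(u, w) \<in> out_arcs K" using w K V2 by (auto simp: out_arcs_def)
  qed
  then have "card ((\<lambda>w. (u,w)) ` {w\<in>V2. Adj u w}) \<le> card (out_arcs K)"
    by (intro card_mono finite_out_arcs)
  moreover have "card ((\<lambda>w. (u,w)) ` {w\<in>V2. Adj u w}) = card {w\<in>V2. Adj u w}"
    by (rule card_image) (auto simp: inj_on_def)
  ultimately show ?thesis using deg2 by simp
qed

context
  fixes g :: "'v \<Rightarrow> nat" and N :: nat and \<zeta> :: complex
  assumes scaled: "\<forall>v\<in>V. of_nat (g v) = of_nat N * Eu v"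
begin

text \<open>If a component \<open>K\<close> of the vertices of \<open>V1u\<close> at which \<open>\<zeta>^g = 1\<close> had a single outgoing
  arc \<open>(y, z)\<close> with \<open>y \<noteq> u\<close>, then harmonicity of \<open>g\<close> at \<open>y\<close> would force \<open>\<zeta>^(g z) = 1\<close>, i.e.
  \<open>z \<in> K\<close>.\<close>
lemma card_out_arcs_root_component:
  defines "A \<equiv> {v\<in>V1u. \<zeta> ^ g v = 1}"
  assumes a: "a \<in> A" and K: "K = component A a" and notu: "u \<notin> K"
  shows "card (out_arcs K) \<ge> 2"
proof (rule ccontr)
  assume "\<not> 2 \<le> card (out_arcs K)"
  then have "card (out_arcs K) \<le> Suc 0" by simp
  then have single: "\<forall>p\<in>out_arcs K. \<forall>q\<in>out_arcs K. p = q"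
    using card_le_Suc0_iff_eq[OF finite_out_arcs] by blast
  have KA: "K \<subseteq> A" using a K component_subset by blast
  have aK: "a \<in> K" using K component_self by simp
  have aV: "a \<in> V" using a V1_sub by (auto simp: A_def)
  obtain y z where yz: "y \<in> K" "y \<in> V" "z \<in> V" "z \<notin> K" "Adj y z"
    using connected_in_exit_edge[OF connected_V[OF aV uV] aK notu] by blast
  have yu: "y \<noteq> u" using yz notu by auto
  let ?Ny = "{a\<in>V. Adj a y}"
  have zN: "z \<in> ?Ny" using yz Adj_sym by blast
  have others: "\<zeta> ^ g b = 1" if "b \<in> ?Ny - {z}" for b
  proof -
    have "b \<in> K"
    proof (rule ccontr)
      assume "b \<notin> K"
      then have "(y, b) \<in> out_arcs K" using that yz Adj_sym by (auto simp: out_arcs_def)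
      moreover have "(y, z) \<in> out_arcs K" using yz by (auto simp: out_arcs_def)
      ultimately show False using single that by blast
    qed
    then show ?thesis using KA by (auto simp: A_def)
  qed
  have "\<zeta> ^ g z = \<zeta> ^ (\<Sum>b\<in>?Ny. g b)"
    using zN others finite_V by (simp add: power_sum prod.remove)
  also have "\<dots> = (\<zeta> ^ g y) ^ nat (- e y)"
    by (simp add: scaled_dual_harmonic[OF scaled uV yz(2) yu] power_mult mult.commute)
  also have "\<dots> = 1" using yz(1) KA by (auto simp: A_def)
  finally have "z \<in> A"
    using V1_neighbour[of y z] yz KA yu by (auto simp: A_def)
  then have "z \<in> K" using component_closed[of y A a z] yz a K KA by blast
  with yz show False by simp
qed

lemma roots_of_unity_valency_sum_nonneg:
  "0 \<le> (\<Sum>v\<in>{v\<in>V1u. \<zeta> ^ g v = 1}. int (valency V Adj v) - 2)"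
proof -
  define A where "A = {v\<in>V1u. \<zeta> ^ g v = 1}"
  have AV: "A \<subseteq> V" using V1_sub by (auto simp: A_def)
  have "0 \<le> (\<Sum>v\<in>K. int (valency V Adj v) - 2)" if K: "K \<in> component A ` A" for K
  proof -
    obtain a where a: "a \<in> A" "K = component A a" using K by blast
    have "K \<subseteq> V1u" using component_subset[OF a(1)] a(2) by (auto simp: A_def)
    then have "card (out_arcs K) \<ge> 2"
    proof (cases "u \<in> K")
      case False
      then show ?thesis using card_out_arcs_root_component a unfolding A_def by blast
    qed (rule card_out_arcs_ge_2_if_u_mem)
    moreover have "K \<subseteq> V" "K \<noteq> {}" using a AV component_subset component_self by blast+
    ultimately show ?thesis
      using sum_valency_minus_2_nonneg component_connected a by blast
  qed
  then have "0 \<le> (\<Sum>K\<in>component A ` A. \<Sum>v\<in>K. int (valency V Adj v) - 2)"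
    by (rule sum_nonneg)
  also have "\<dots> = (\<Sum>v\<in>A. int (valency V Adj v) - 2)"
    using AV finite_V finite_subset by (metis sum_over_components)
  finally show ?thesis by (simp add: A_def)
qed

end

definition V2_coords :: "('v \<Rightarrow> nat) \<Rightarrow> 'v \<Rightarrow> rat" where
  "V2_coords k w = (\<Sum>v\<in>V. of_nat (k v) * dual_restr_coeff V2 v w)"

lemma sum_V1_split: "(\<Sum>v\<in>V. h v) = (\<Sum>v\<in>V1u. h v) + (\<Sum>v\<in>V - V1u. h v)"
  using V1_sub finite_V by (metis sum.subset_diff add.commute)

lemma V2_coords_u: "V2_coords k u = (\<Sum>v\<in>V1u. of_nat (k v) * dual_restr_coeff V2 v u)"
proof -
  have "(\<Sum>v\<in>V - V1u. of_nat (k v) * dual_restr_coeff V2 v u) = 0"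
    using dual_restr_coeff_outside_V1 by (intro sum.neutral) auto
  then show ?thesis unfolding V2_coords_def sum_V1_split[of "\<lambda>v. of_nat (k v) * dual_restr_coeff V2 v u"] by simp
qed

lemma V2_coords_other: "w \<in> V2 \<Longrightarrow> w \<noteq> u \<Longrightarrow> V2_coords k w = (\<Sum>v\<in>V - V1u. of_nat (k v) * dual_restr_coeff V2 v w)"
proof -
  assume w: "w \<in> V2" "w \<noteq> u"
  have "(\<Sum>v\<in>V1u. of_nat (k v) * dual_restr_coeff V2 v w) = 0"
    using dual_restr_coeff_V1_other w by (intro sum.neutral) auto
  then show ?thesis unfolding V2_coords_def sum_V1_split[of "\<lambda>v. of_nat (k v) * dual_restr_coeff V2 v w"] by simp
qed

lemma mem_exps_dual_comb_iff:
  "k \<in> exps V Adj e V2 (dual_comb V Adj e V2 r) \<longleftrightarrow>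
     (\<forall>w. w \<notin> V \<longrightarrow> k w = 0) \<and> (\<forall>w\<in>V2. V2_coords k w = r w)"
proof -
  have eq: "restr V2 (\<lambda>w. \<Sum>v\<in>V. of_nat (k v) * Edual V Adj e v w) = dual_comb V Adj e V2 (V2_coords k)"
    unfolding V2_coords_def by (rule restr_sum_Edual_eq_dual_comb[OF V2])
  show ?thesis
  proof
    assume k: "k \<in> exps V Adj e V2 (dual_comb V Adj e V2 r)"
    then have "dual_comb V Adj e V2 (V2_coords k) = dual_comb V Adj e V2 r" using eq by (simp add: exps_def)
    then show "(\<forall>w. w \<notin> V \<longrightarrow> k w = 0) \<and> (\<forall>w\<in>V2. V2_coords k w = r w)"
      using dual_comb_unique[OF V2] k by (simp add: exps_def)
  next
    assume k: "(\<forall>w. w \<notin> V \<longrightarrow> k w = 0) \<and> (\<forall>w\<in>V2. V2_coords k w = r w)"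
    then have "dual_comb V Adj e V2 (V2_coords k) = dual_comb V Adj e V2 r" by (intro dual_comb_cong) auto
    then show "k \<in> exps V Adj e V2 (dual_comb V Adj e V2 r)" using eq k by (simp add: exps_def)
  qed
qed

definition Zfactor :: "'v \<Rightarrow> nat \<Rightarrow> rat" where
  "Zfactor v j = (-1) ^ j * ((of_int (int (valency V Adj v) - 2)) gchoose j)"

text \<open>By the vanishing results on \<open>dual_restr_coeff\<close>, the exponents at vertices of \<open>V1u\<close> only
  contribute to the \<open>u\<close>-coordinate and all others only to the remaining coordinates.\<close>
definition exps_V1 :: "('v \<Rightarrow> rat) \<Rightarrow> ('v \<Rightarrow> nat) set" where
  "exps_V1 r = {\<kappa>. (\<forall>w. w \<notin> V1u \<longrightarrow> \<kappa> w = 0) \<and> (\<Sum>v\<in>V1u. of_nat (\<kappa> v) * dual_restr_coeff V2 v u) = r u}"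

definition exps_rest :: "('v \<Rightarrow> rat) \<Rightarrow> ('v \<Rightarrow> nat) set" where
  "exps_rest r = {\<rho>. (\<forall>w. w \<notin> V - V1u \<longrightarrow> \<rho> w = 0) \<and>
      (\<forall>w\<in>V2 - {u}. (\<Sum>v\<in>V - V1u. of_nat (\<rho> v) * dual_restr_coeff V2 v w) = r w)}"

lemma exps_dual_comb_split:
  "bij_betw (\<lambda>k. ((\<lambda>v. if v \<in> V1u then k v else 0), (\<lambda>v. if v \<in> V - V1u then k v else 0)))
     (exps V Adj e V2 (dual_comb V Adj e V2 r)) (exps_V1 r \<times> exps_rest r)"
proof (rule bij_betw_byWitness[where f' = "\<lambda>(\<kappa>, \<rho>) v. \<kappa> v + \<rho> v"])
  show "\<forall>k\<in>exps V Adj e V2 (dual_comb V Adj e V2 r).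
      (\<lambda>(\<kappa>, \<rho>) v. \<kappa> v + \<rho> v) ((\<lambda>v. if v \<in> V1u then k v else 0), (\<lambda>v. if v \<in> V - V1u then k v else 0)) = k"
    using V1_sub by (auto simp: mem_exps_dual_comb_iff fun_eq_iff)
  show "\<forall>p\<in>exps_V1 r \<times> exps_rest r. (\<lambda>k. ((\<lambda>v. if v \<in> V1u then k v else 0), (\<lambda>v. if v \<in> V - V1u then k v else 0)))
      ((\<lambda>(\<kappa>, \<rho>) v. \<kappa> v + \<rho> v) p) = p"
    by (auto simp: exps_V1_def exps_rest_def fun_eq_iff)
  show "(\<lambda>k. ((\<lambda>v. if v \<in> V1u then k v else 0), (\<lambda>v. if v \<in> V - V1u then k v else 0)))
      ` exps V Adj e V2 (dual_comb V Adj e V2 r) \<subseteq> exps_V1 r \<times> exps_rest r"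
  proof safe
    fix k assume "k \<in> exps V Adj e V2 (dual_comb V Adj e V2 r)"
    then have k: "\<forall>w. w \<notin> V \<longrightarrow> k w = 0" "\<forall>w\<in>V2. V2_coords k w = r w"
      by (auto simp: mem_exps_dual_comb_iff)
    have "(\<Sum>v\<in>V1u. of_nat (if v \<in> V1u then k v else 0) * dual_restr_coeff V2 v u) = V2_coords k u"
      unfolding V2_coords_u by (rule sum.cong) auto
    then show "(\<lambda>v. if v \<in> V1u then k v else 0) \<in> exps_V1 r"
      using k uV2 by (simp add: exps_V1_def)
    have "(\<Sum>v\<in>V - V1u. of_nat (if v \<in> V - V1u then k v else 0) * dual_restr_coeff V2 v w) = V2_coords k w"
      if "w \<in> V2 - {u}" for w
      using that by (subst V2_coords_other) (auto intro: sum.cong)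
    then show "(\<lambda>v. if v \<in> V - V1u then k v else 0) \<in> exps_rest r"
      using k by (simp add: exps_rest_def)
  qed
  show "(\<lambda>(\<kappa>, \<rho>) v. \<kappa> v + \<rho> v) ` (exps_V1 r \<times> exps_rest r) \<subseteq> exps V Adj e V2 (dual_comb V Adj e V2 r)"
  proof safe
    fix \<kappa> \<rho> assume "\<kappa> \<in> exps_V1 r" "\<rho> \<in> exps_rest r"
    then have k: "\<forall>w. w \<notin> V1u \<longrightarrow> \<kappa> w = 0" "(\<Sum>v\<in>V1u. of_nat (\<kappa> v) * dual_restr_coeff V2 v u) = r u"
      and r: "\<forall>w. w \<notin> V - V1u \<longrightarrow> \<rho> w = 0"
        "\<forall>w\<in>V2 - {u}. (\<Sum>v\<in>V - V1u. of_nat (\<rho> v) * dual_restr_coeff V2 v w) = r w"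
      by (auto simp: exps_V1_def exps_rest_def)
    have "V2_coords (\<lambda>v. \<kappa> v + \<rho> v) w = r w" if "w \<in> V2" for w
    proof (cases "w = u")
      case True
      then show ?thesis using k r by (simp add: V2_coords_u cong: sum.cong)
    next
      case False
      have "V2_coords (\<lambda>v. \<kappa> v + \<rho> v) w = (\<Sum>v\<in>V - V1u. of_nat (\<kappa> v + \<rho> v) * dual_restr_coeff V2 v w)"
        by (rule V2_coords_other[OF that False])
      also have "\<dots> = (\<Sum>v\<in>V - V1u. of_nat (\<rho> v) * dual_restr_coeff V2 v w)"
        using k(1) by (intro sum.cong) auto
      finally show ?thesis using r that False by simp
    qed
    moreover have "\<forall>w. w \<notin> V \<longrightarrow> \<kappa> w + \<rho> w = 0" using k r V1_sub by auto
    ultimately show "(\<lambda>v. \<kappa> v + \<rho> v) \<in> exps V Adj e V2 (dual_comb V Adj e V2 r)"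
      by (simp add: mem_exps_dual_comb_iff)
  qed
qed

lemma Zred_coeff_dual_comb_split:
  "Zred_coeff V Adj e V2 (dual_comb V Adj e V2 r)
     = (\<Sum>\<kappa>\<in>exps_V1 r. \<Prod>v\<in>V1u. Zfactor v (\<kappa> v)) * (\<Sum>\<rho>\<in>exps_rest r. \<Prod>v\<in>V - V1u. Zfactor v (\<rho> v))"
proof -
  let ?f = "\<lambda>(\<kappa>, \<rho>). (\<Prod>v\<in>V1u. Zfactor v (\<kappa> v)) * (\<Prod>v\<in>V - V1u. Zfactor v (\<rho> v))"
  have "Zred_coeff V Adj e V2 (dual_comb V Adj e V2 r)
      = (\<Sum>k\<in>exps V Adj e V2 (dual_comb V Adj e V2 r).
           ?f ((\<lambda>v. if v \<in> V1u then k v else 0), (\<lambda>v. if v \<in> V - V1u then k v else 0)))"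
    unfolding Zred_coeff_def Zcoeff_factor_def Zfactor_def[symmetric]
  proof (intro sum.cong refl)
    fix k :: "'v \<Rightarrow> nat"
    have "(\<Prod>v\<in>V. Zfactor v (k v)) = (\<Prod>v\<in>V1u. Zfactor v (k v)) * (\<Prod>v\<in>V - V1u. Zfactor v (k v))"
      using V1_sub finite_V by (metis prod.subset_diff mult.commute)
    also have "\<dots> = ?f ((\<lambda>v. if v \<in> V1u then k v else 0), (\<lambda>v. if v \<in> V - V1u then k v else 0))"
    proof -
      have "(\<Prod>v\<in>V1u. Zfactor v (if v \<in> V1u then k v else 0)) = (\<Prod>v\<in>V1u. Zfactor v (k v))"
        "(\<Prod>v\<in>V - V1u. Zfactor v (if v \<in> V - V1u then k v else 0)) = (\<Prod>v\<in>V - V1u. Zfactor v (k v))"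
        by (rule prod.cong; simp)+
      then show ?thesis by (simp only: prod.case)
    qed
    finally show "(\<Prod>v\<in>V. Zfactor v (k v))
        = ?f ((\<lambda>v. if v \<in> V1u then k v else 0), (\<lambda>v. if v \<in> V - V1u then k v else 0))" .
  qed
  also have "\<dots> = (\<Sum>p\<in>exps_V1 r \<times> exps_rest r. ?f p)"
    by (rule sum.reindex_bij_betw[OF exps_dual_comb_split])
  finally show ?thesis by (simp add: sum.cartesian_product[symmetric] sum_product)
qed

lemma scaled_weight_V1:
  assumes scaled: "\<forall>v\<in>V. of_nat (g v) = of_nat N * Eu v"
  shows "of_nat (\<Sum>v\<in>V1u. \<kappa> v * g v)
      = of_nat N * Eu u * (\<Sum>v\<in>V1u. of_nat (\<kappa> v) * dual_restr_coeff V2 v u)"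
  unfolding of_nat_sum sum_distrib_left using scaled V1_sub Edual_pos[OF uV uV]
  by (intro sum.cong refl) (auto simp: dual_restr_coeff_V1_u)

text \<open>After scaling \<open>E_u^*\<close> to the integral vector \<open>g\<close>, the first factor of
  \<open>Zred_coeff_dual_comb_split\<close> is a coefficient of \<open>\<Prod>v\<in>V1u. (1 - t^(g v))^(\<delta>_v - 2)\<close>.\<close>
lemma exps_V1_eq_weighted_compositions:
  assumes scaled: "\<forall>v\<in>V. of_nat (g v) = of_nat N * Eu v" and N: "N > 0" and k0: "\<kappa>0 \<in> exps_V1 r"
  shows "exps_V1 r = weighted_compositions V1u g (\<Sum>v\<in>V1u. \<kappa>0 v * g v)"
proof -
  have Eu_pos: "Eu u > 0" using Edual_pos[OF uV uV] .
  have w0: "of_nat (\<Sum>v\<in>V1u. \<kappa>0 v * g v) = of_nat N * Eu u * r u"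
    using scaled_weight_V1[OF scaled, of \<kappa>0] k0 by (simp add: exps_V1_def)
  have "(\<Sum>v\<in>V1u. \<kappa> v * g v) = (\<Sum>v\<in>V1u. \<kappa>0 v * g v)
      \<longleftrightarrow> of_nat N * Eu u * (\<Sum>v\<in>V1u. of_nat (\<kappa> v) * dual_restr_coeff V2 v u) = of_nat N * Eu u * r u"
    for \<kappa>
    using scaled_weight_V1[OF scaled, of \<kappa>] w0 by (metis of_nat_eq_iff)
  then have "(\<Sum>v\<in>V1u. \<kappa> v * g v) = (\<Sum>v\<in>V1u. \<kappa>0 v * g v)
      \<longleftrightarrow> (\<Sum>v\<in>V1u. of_nat (\<kappa> v) * dual_restr_coeff V2 v u) = r u" for \<kappa>
    using N Eu_pos by simp
  then show ?thesis by (auto simp: exps_V1_def weighted_compositions_def)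
qed

lemma exps_V1_sum_eq_0:
  assumes large: "(\<Sum>v\<in>V1u. (of_int (int (valency V Adj v)) - 2) * Eu v) < r u * Eu u"
  shows "(\<Sum>\<kappa>\<in>exps_V1 r. \<Prod>v\<in>V1u. Zfactor v (\<kappa> v)) = 0"
proof (cases "exps_V1 r = {}")
  case False
  then obtain \<kappa>0 where k0: "\<kappa>0 \<in> exps_V1 r" by blast
  obtain N g where N: "N > 0" and scaled_pos: "\<forall>v\<in>V. of_nat (g v) = of_nat N * Eu v \<and> g v > 0"
    using positive_rat_common_denominator[OF finite_V, of Eu] Edual_pos[OF uV] by blast
  then have scaled: "\<forall>v\<in>V. of_nat (g v) = of_nat N * Eu v" by blast
  define n where "n v = int (valency V Adj v) - 2" for v
  define Q where "Q = (\<Sum>v\<in>V1u. \<kappa>0 v * g v)"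
  have E: "exps_V1 r = weighted_compositions V1u g Q"
    unfolding Q_def by (rule exps_V1_eq_weighted_compositions[OF scaled N k0])
  have "of_int (\<Sum>v\<in>V1u. n v * int (g v)) = of_nat N * (\<Sum>v\<in>V1u. (of_int (int (valency V Adj v)) - 2) * Eu v)"
    using scaled V1_sub unfolding of_int_sum sum_distrib_left n_def
    by (intro sum.cong refl) (auto simp: algebra_simps)
  also have "\<dots> < of_nat N * (r u * Eu u)" using large N by simp
  also have "\<dots> = of_nat Q"
    using scaled_weight_V1[OF scaled, of \<kappa>0] k0 by (simp add: Q_def exps_V1_def)
  finally have "(of_int (\<Sum>v\<in>V1u. n v * int (g v)) :: rat) < of_int (int Q)" by simp
  then have "int Q > (\<Sum>v\<in>V1u. n v * int (g v))" by (simp only: of_int_less_iff)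
  then have "(\<Sum>\<kappa>\<in>weighted_compositions V1u g Q. \<Prod>v\<in>V1u. alt_gbinomial (n v) (\<kappa> v)) = 0"
    using sum_weighted_compositions_alt_gbinomial_eq_0[OF finite_V1 _ _, of g n Q]
      roots_of_unity_valency_sum_nonneg[OF scaled] scaled_pos V1_sub by (auto simp: n_def)
  moreover have "(of_rat (\<Sum>\<kappa>\<in>exps_V1 r. \<Prod>v\<in>V1u. Zfactor v (\<kappa> v)) :: complex)
      = (\<Sum>\<kappa>\<in>weighted_compositions V1u g Q. \<Prod>v\<in>V1u. alt_gbinomial (n v) (\<kappa> v))"
    by (simp add: E of_rat_sum of_rat_prod of_rat_mult of_rat_power of_rat_gchoose of_rat_diff
        Zfactor_def alt_gbinomial_def n_def)
  ultimately show ?thesis by simp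
qed simp

lemma boundary_inequality:
  assumes "dual_comb V Adj e V2 r \<in> Zred_support V Adj e V2"
  shows "r u * Edual V Adj e u u \<le> (\<Sum>v\<in>V1u. (of_int (int (valency V Adj v)) - 2) * Edual V Adj e v u)"
proof -
  have "(\<Sum>\<kappa>\<in>exps_V1 r. \<Prod>v\<in>V1u. Zfactor v (\<kappa> v)) \<noteq> 0"
    using assms Zred_coeff_dual_comb_split[of r] by (auto simp: Zred_support_def)
  then have "r u * Eu u \<le> (\<Sum>v\<in>V1u. (of_int (int (valency V Adj v)) - 2) * Eu v)"
    using exps_V1_sum_eq_0 by force
  moreover have "Edual V Adj e v u = Eu v" if "v \<in> V1u" for v
    using that V1_sub dual_sub_sym[OF subset_refl _ uV] by (auto simp: Edual_eq_dual_sub)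
  ultimately show ?thesis using u_in_V1 by (simp cong: sum.cong)
qed

end

theorem lemma4p1:
  fixes V V2 :: "'v set" and Adj :: "'v \<Rightarrow> 'v \<Rightarrow> bool" and e :: "'v \<Rightarrow> int"
  assumes tree: "is_tree V Adj"
    and negdef: "neg_definite V Adj e"
    and sub: "V2 \<subseteq> V"
    and conn2: "is_connected V2 Adj"
  shows "(\<forall>m\<in>Zred_support V Adj e V2.
            \<exists>r. (\<forall>v\<in>V2. r v \<ge> 0) \<and> m = dual_comb V Adj e V2 r \<and>
                (\<forall>r'. (\<forall>v\<in>V2. r' v \<ge> 0) \<and> m = dual_comb V Adj e V2 r' \<longrightarrow> (\<forall>v\<in>V2. r' v = r v)))
       \<and> (\<forall>u\<in>boundary V Adj V2. \<forall>r.
            card {w \<in> V2. Adj u w} \<ge> 2 \<longrightarrow>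
            (\<forall>v\<in>V2. r v \<ge> 0) \<longrightarrow>
            dual_comb V Adj e V2 r \<in> Zred_support V Adj e V2 \<longrightarrow>
            r u * Edual V Adj e u u
              \<le> (\<Sum>v\<in>V1 V Adj V2 u. (of_int (int (valency V Adj v)) - 2) * Edual V Adj e v u))"
proof -
  interpret plumbing_tree V Adj e using tree negdef by unfold_locales
  show ?thesis
  proof (intro conjI ballI allI impI)
    fix m assume "m \<in> Zred_support V Adj e V2"
    then show "\<exists>r. (\<forall>v\<in>V2. r v \<ge> 0) \<and> m = dual_comb V Adj e V2 r \<and>
                (\<forall>r'. (\<forall>v\<in>V2. r' v \<ge> 0) \<and> m = dual_comb V Adj e V2 r' \<longrightarrow> (\<forall>v\<in>V2. r' v = r v))"
      by (rule Zred_support_dual_comb[OF sub])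
  next
    fix u r
    assume u: "u \<in> boundary V Adj V2" and d: "2 \<le> card {w \<in> V2. Adj u w}"
      and s: "dual_comb V Adj e V2 r \<in> Zred_support V Adj e V2"
    interpret boundary_vertex V Adj e V2 u using sub conn2 u d by unfold_locales
    show "r u * Edual V Adj e u u \<le> (\<Sum>v\<in>V1 V Adj V2 u. (of_int (int (valency V Adj v)) - 2) * Edual V Adj e v u)"
      by (rule boundary_inequality[OF s])
  qed
qed

end
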